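(* Let $H$ be a group, $K\lneq H$, $\phi\in\operatorname{Aut}(H)$, $G=\langle H,t;\ tkt^{-1}=\phi(k),\ k\in K\rangle$. The map $\chi_2:\operatorname{Out}_H^{(V)}(G)\to N_H(K)/Z(H)K$ sending the outer class of $\alpha_{(\gamma_b,a)}$ to $bZ(H)K$ is a well-defined surjective homomorphism with kernel $C_K$.
   Context: $\gamma_b$ denotes $h\mapsto b^{-1}hb$. For $\delta\in\operatorname{Aut}(H)$ and $a\in H$ with $\delta(K)=K$ and $\phi(\delta(k))=a^{-1}\delta(\phi(k))a$ for all $k\in K$, $\alpha_{(\delta,a)}$ denotes the automorphism of $G$ given by $h\mapsto\delta(h)$ ($h\in H$), $t\mapsto at$. $\operatorname{Out}_H^{(V)}(G)$ is the subgroup of $\operatorname{Out}(G)$ consisting of the outer classes of the automorphisms $\alpha_{(\gamma_b,a)}$, where $b\in N_H(K)$, $a\in H$ and $ba\phi(b)^{-1}\in C_H(\phi(K))$. $C_K$ is the subgroup of outer classes of $\alpha_{(1,a)}$ with $a\in C_H(\phi(K))$. Automorphisms are composed left to right. *)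

theory Defs
  imports "HOL-Algebra.Algebra"
begin

text \<open>Letters: Inl h (h in H), Inr True = t, Inr False = t^-1.\<close>

definition hnn_words :: "('a, 'm) monoid_scheme \<Rightarrow> ('a + bool) list set" where
  "hnn_words H = {w. \<forall>x \<in> set w. (case x of Inl h \<Rightarrow> h \<in> carrier H | Inr _ \<Rightarrow> True)}"

inductive hnn_eq :: "('a, 'm) monoid_scheme \<Rightarrow> 'a set \<Rightarrow> ('a \<Rightarrow> 'a)
    \<Rightarrow> ('a + bool) list \<Rightarrow> ('a + bool) list \<Rightarrow> bool"
  for H :: "('a, 'm) monoid_scheme" and K :: "'a set" and \<phi> :: "'a \<Rightarrow> 'a" where
  refl: "hnn_eq H K \<phi> w w"
| sym: "hnn_eq H K \<phi> w v \<Longrightarrow> hnn_eq H K \<phi> v w"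
| trans: "hnn_eq H K \<phi> u v \<Longrightarrow> hnn_eq H K \<phi> v w \<Longrightarrow> hnn_eq H K \<phi> u w"
| cong: "hnn_eq H K \<phi> w v \<Longrightarrow> hnn_eq H K \<phi> (u @ w @ z) (u @ v @ z)"
| h_mult: "h \<in> carrier H \<Longrightarrow> h' \<in> carrier H \<Longrightarrow>
           hnn_eq H K \<phi> [Inl h, Inl h'] [Inl (h \<otimes>\<^bsub>H\<^esub> h')]"
| h_one: "hnn_eq H K \<phi> [Inl \<one>\<^bsub>H\<^esub>] []"
| t_tinv: "hnn_eq H K \<phi> [Inr True, Inr False] []"
| tinv_t: "hnn_eq H K \<phi> [Inr False, Inr True] []"
| rel: "k \<in> K \<Longrightarrow> hnn_eq H K \<phi> [Inr True, Inl k, Inr False] [Inl (\<phi> k)]"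

definition hnn_class :: "('a, 'm) monoid_scheme \<Rightarrow> 'a set \<Rightarrow> ('a \<Rightarrow> 'a)
    \<Rightarrow> ('a + bool) list \<Rightarrow> ('a + bool) list set" where
  "hnn_class H K \<phi> w = {v \<in> hnn_words H. hnn_eq H K \<phi> w v}"

definition hnn_mult :: "('a, 'm) monoid_scheme \<Rightarrow> 'a set \<Rightarrow> ('a \<Rightarrow> 'a)
    \<Rightarrow> ('a + bool) list set \<Rightarrow> ('a + bool) list set \<Rightarrow> ('a + bool) list set" where
  "hnn_mult H K \<phi> A B = hnn_class H K \<phi> ((SOME x. x \<in> A) @ (SOME y. y \<in> B))"

definition HNN :: "('a, 'm) monoid_scheme \<Rightarrow> 'a set \<Rightarrow> ('a \<Rightarrow> 'a)
    \<Rightarrow> ('a + bool) list set monoid" where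
  "HNN H K \<phi> =
    \<lparr>carrier = hnn_class H K \<phi> ` hnn_words H,
     monoid.mult = hnn_mult H K \<phi>,
     one = hnn_class H K \<phi> []\<rparr>"

definition hnn_inc :: "('a, 'm) monoid_scheme \<Rightarrow> 'a set \<Rightarrow> ('a \<Rightarrow> 'a) \<Rightarrow> 'a
    \<Rightarrow> ('a + bool) list set" where
  "hnn_inc H K \<phi> h = hnn_class H K \<phi> [Inl h]"

definition hnn_t :: "('a, 'm) monoid_scheme \<Rightarrow> 'a set \<Rightarrow> ('a \<Rightarrow> 'a) \<Rightarrow> ('a + bool) list set" where
  "hnn_t H K \<phi> = hnn_class H K \<phi> [Inr True]"

text \<open>Aut(G) with left-to-right composition: (f * g)(x) = g (f x).\<close>
definition AutL :: "('a, 'c) monoid_scheme \<Rightarrow> ('a \<Rightarrow> 'a) monoid" where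
  "AutL G = (AutoGroup G)\<lparr>monoid.mult := (\<lambda>f g. g \<otimes>\<^bsub>AutoGroup G\<^esub> f)\<rparr>"

definition Inn :: "('a, 'c) monoid_scheme \<Rightarrow> ('a \<Rightarrow> 'a) set" where
  "Inn G = {(\<lambda>x \<in> carrier G. inv\<^bsub>G\<^esub> g \<otimes>\<^bsub>G\<^esub> x \<otimes>\<^bsub>G\<^esub> g) | g. g \<in> carrier G}"

definition OutL :: "('a, 'c) monoid_scheme \<Rightarrow> ('a \<Rightarrow> 'a) set monoid" where
  "OutL G = AutL G Mod Inn G"

definition outer_class :: "('a, 'c) monoid_scheme \<Rightarrow> ('a \<Rightarrow> 'a) \<Rightarrow> ('a \<Rightarrow> 'a) set" where
  "outer_class G f = Inn G #>\<^bsub>AutL G\<^esub> f"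

definition centralizer :: "('a, 'm) monoid_scheme \<Rightarrow> 'a set \<Rightarrow> 'a set" where
  "centralizer H S = {g \<in> carrier H. \<forall>s \<in> S. g \<otimes>\<^bsub>H\<^esub> s = s \<otimes>\<^bsub>H\<^esub> g}"

definition center :: "('a, 'm) monoid_scheme \<Rightarrow> 'a set" where
  "center H = centralizer H (carrier H)"

definition hnn_alpha :: "('a, 'm) monoid_scheme \<Rightarrow> 'a set \<Rightarrow> ('a \<Rightarrow> 'a)
    \<Rightarrow> ('a \<Rightarrow> 'a) \<Rightarrow> 'a \<Rightarrow> (('a + bool) list set \<Rightarrow> ('a + bool) list set)" where
  "hnn_alpha H K \<phi> \<delta> a =
    (THE f. f \<in> auto (HNN H K \<phi>)
       \<and> (\<forall>h \<in> carrier H. f (hnn_inc H K \<phi> h) = hnn_inc H K \<phi> (\<delta> h))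
       \<and> f (hnn_t H K \<phi>) = hnn_inc H K \<phi> a \<otimes>\<^bsub>HNN H K \<phi>\<^esub> hnn_t H K \<phi>)"

definition conjH :: "('a, 'm) monoid_scheme \<Rightarrow> 'a \<Rightarrow> 'a \<Rightarrow> 'a" where
  "conjH H b = (\<lambda>h. inv\<^bsub>H\<^esub> b \<otimes>\<^bsub>H\<^esub> h \<otimes>\<^bsub>H\<^esub> b)"

definition OutV :: "('a, 'm) monoid_scheme \<Rightarrow> 'a set \<Rightarrow> ('a \<Rightarrow> 'a)
    \<Rightarrow> (('a + bool) list set \<Rightarrow> ('a + bool) list set) set set" where
  "OutV H K \<phi> = {outer_class (HNN H K \<phi>) (hnn_alpha H K \<phi> (conjH H b) a) | b a.
      b \<in> normalizer H K \<and> a \<in> carrier H \<and>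
      b \<otimes>\<^bsub>H\<^esub> a \<otimes>\<^bsub>H\<^esub> inv\<^bsub>H\<^esub> (\<phi> b) \<in> centralizer H (\<phi> ` K)}"

definition CK :: "('a, 'm) monoid_scheme \<Rightarrow> 'a set \<Rightarrow> ('a \<Rightarrow> 'a)
    \<Rightarrow> (('a + bool) list set \<Rightarrow> ('a + bool) list set) set set" where
  "CK H K \<phi> = {outer_class (HNN H K \<phi>) (hnn_alpha H K \<phi> (\<lambda>h. h) a) | a.
      a \<in> centralizer H (\<phi> ` K)}"

end

theory Submission
  imports Defs
begin

text \<open>
  Everything rests on two facts about G obtained from a normal form of van der Waerden type
  (G acts on reduced sequences of syllables built from coset representatives of K and \<phi>(K)):
  H embeds in G and, since K is proper, every element of G centralizing H lies in H; moreover
  t d t\<inverse> \<in> H with d \<in> H forces d \<in> K (Britton).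

  If \<alpha>(\<gamma>_b, a) and \<alpha>(\<gamma>_b', a') differ by conjugation with d \<in> G, comparing them on H shows that
  b d b'\<inverse> centralizes H, so it is some z \<in> Z(H) and d \<in> H; comparing them on t gives
  t d t\<inverse> \<in> H, so d \<in> K and b' \<in> Z(H)K b. Hence \<chi> is well defined. It is a homomorphism since
  \<alpha>(\<gamma>_b1, a1) \<alpha>(\<gamma>_b2, a2) = \<alpha>(\<gamma>_(b1 b2), \<gamma>_b2(a1) a2), surjective via a = b\<inverse> \<phi>(b), and for
  b = z k \<in> Z(H)K the automorphism \<alpha>(\<gamma>_b, a) is \<alpha>(1, k a \<phi>(k)\<inverse>) followed by conjugation
  with k, which identifies the kernel with C_K.
\<close>

section \<open>Normalizers, centralizers and outer classes\<close>

lemma (in group) m_inv_cancel_left [simp]: "x \<in> carrier G \<Longrightarrow> y \<in> carrier G \<Longrightarrow> x \<otimes> (inv x \<otimes> y) = y"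
  by (simp add: m_assoc[symmetric])
lemma (in group) inv_m_cancel_left [simp]: "x \<in> carrier G \<Longrightarrow> y \<in> carrier G \<Longrightarrow> inv x \<otimes> (x \<otimes> y) = y"
  by (simp add: m_assoc[symmetric])

lemma (in group) commute_of_conj_eq:
  assumes c: "B \<in> carrier G" "B' \<in> carrier G" "d \<in> carrier G" "x \<in> carrier G"
    and eq: "inv B' \<otimes> x \<otimes> B' = inv d \<otimes> (inv B \<otimes> x \<otimes> B) \<otimes> d"
  shows "(B \<otimes> d \<otimes> inv B') \<otimes> x = x \<otimes> (B \<otimes> d \<otimes> inv B')"
proof -
  have "B \<otimes> d \<otimes> (inv B' \<otimes> x \<otimes> B') \<otimes> inv B' = B \<otimes> d \<otimes> (inv d \<otimes> (inv B \<otimes> x \<otimes> B) \<otimes> d) \<otimes> inv B'"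
    by (simp only: eq)
  thus ?thesis using c by (simp add: m_assoc)
qed

lemma (in group) conj_eq_of_twisted_eq:
  assumes c: "A \<in> carrier G" "A' \<in> carrier G" "D \<in> carrier G" "T \<in> carrier G"
    and eq: "A' \<otimes> T = inv D \<otimes> (A \<otimes> T) \<otimes> D"
  shows "T \<otimes> D \<otimes> inv T = inv A \<otimes> D \<otimes> A'"
proof -
  have "inv A \<otimes> (D \<otimes> (A' \<otimes> T)) \<otimes> inv T = inv A \<otimes> (D \<otimes> (inv D \<otimes> (A \<otimes> T) \<otimes> D)) \<otimes> inv T"
    by (simp only: eq)
  thus ?thesis using c by (simp add: m_assoc)
qed

lemma (in group) normalizer_conj:
  assumes S: "S \<subseteq> carrier G" and b: "b \<in> normalizer G S" and k: "k \<in> S"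
  shows "b \<otimes> k \<otimes> inv b \<in> S" "inv b \<otimes> k \<otimes> b \<in> S"
proof -
  have bc: "b \<in> carrier G" using b by (simp add: normalizer_def stabilizer_def)
  have eq: "b <# S #> inv b = S" using b S by (simp add: normalizer_def stabilizer_def)
  have "b \<otimes> k \<otimes> inv b \<in> b <# S #> inv b" using k by (auto simp: l_coset_def r_coset_def)
  thus "b \<otimes> k \<otimes> inv b \<in> S" using eq by simp
  have "k \<in> b <# S #> inv b" using eq k by simp
  then obtain k' where k': "k' \<in> S" "k = b \<otimes> k' \<otimes> inv b" by (auto simp: l_coset_def r_coset_def)
  have "inv b \<otimes> k \<otimes> b = k'" using k' bc S by (auto simp: m_assoc)
  thus "inv b \<otimes> k \<otimes> b \<in> S" using k' by simp
qed

lemma (in group) centralizer_carrier: "c \<in> centralizer G S \<Longrightarrow> c \<in> carrier G"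
  by (simp add: centralizer_def)
lemma (in group) centralizerD: "c \<in> centralizer G S \<Longrightarrow> s \<in> S \<Longrightarrow> c \<otimes> s = s \<otimes> c"
  by (simp add: centralizer_def)

lemma (in group) center_commute: "z \<in> center G \<Longrightarrow> h \<in> carrier G \<Longrightarrow> z \<otimes> h = h \<otimes> z"
  by (simp add: center_def centralizer_def)

lemma (in group) centralizer_mult: "c \<in> centralizer G S \<Longrightarrow> d \<in> centralizer G S \<Longrightarrow> S \<subseteq> carrier G \<Longrightarrow> c \<otimes> d \<in> centralizer G S"
proof -
  assume c: "c \<in> centralizer G S" and d: "d \<in> centralizer G S" and S: "S \<subseteq> carrier G"
  have cc: "c \<in> carrier G" and dc: "d \<in> carrier G" using c d by (auto simp: centralizer_def)
  show ?thesis unfolding centralizer_def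
  proof (intro CollectI conjI ballI)
    show "c \<otimes> d \<in> carrier G" using cc dc by simp
    fix s assume s: "s \<in> S"
    have sc: "s \<in> carrier G" using s S by blast
    have "c \<otimes> d \<otimes> s = c \<otimes> (d \<otimes> s)" using cc dc sc by (simp add: m_assoc)
    also have "\<dots> = c \<otimes> (s \<otimes> d)" using d s by (simp add: centralizer_def)
    also have "\<dots> = (c \<otimes> s) \<otimes> d" using cc dc sc by (simp add: m_assoc)
    also have "\<dots> = (s \<otimes> c) \<otimes> d" using c s by (simp add: centralizer_def)
    finally show "c \<otimes> d \<otimes> s = s \<otimes> (c \<otimes> d)" using cc dc sc by (simp add: m_assoc)
  qed
qed

lemma (in group) centralizer_inv: "c \<in> centralizer G S \<Longrightarrow> S \<subseteq> carrier G \<Longrightarrow> inv c \<in> centralizer G S"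
proof -
  assume c: "c \<in> centralizer G S" and S: "S \<subseteq> carrier G"
  have cc: "c \<in> carrier G" using c by (simp add: centralizer_def)
  show ?thesis unfolding centralizer_def
  proof (intro CollectI conjI ballI)
    show "inv c \<in> carrier G" using cc by simp
    fix s assume s: "s \<in> S"
    have sc: "s \<in> carrier G" using s S by blast
    have "c \<otimes> s = s \<otimes> c" using c s by (simp add: centralizer_def)
    hence "inv c \<otimes> (c \<otimes> s) \<otimes> inv c = inv c \<otimes> (s \<otimes> c) \<otimes> inv c" by simp
    thus "inv c \<otimes> s = s \<otimes> inv c" using cc sc by (simp add: m_assoc)
  qed
qed

lemma (in group) center_centralizer: "z \<in> center G \<Longrightarrow> S \<subseteq> carrier G \<Longrightarrow> z \<in> centralizer G S"
  by (auto simp: center_def centralizer_def)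

lemma (in group) center_carrier: "z \<in> center G \<Longrightarrow> z \<in> carrier G"
  by (simp add: center_def centralizer_def)

lemma (in group) center_mult: "z \<in> center G \<Longrightarrow> z' \<in> center G \<Longrightarrow> z \<otimes> z' \<in> center G"
  using centralizer_mult[of z "carrier G" z'] by (simp add: center_def)
lemma (in group) center_inv: "z \<in> center G \<Longrightarrow> inv z \<in> center G"
  using centralizer_inv[of z "carrier G"] by (simp add: center_def)

lemma (in group) subgroup_center_set_mult:
  assumes S: "subgroup S G" shows "subgroup (center G <#> S) G"
proof (rule subgroupI)
  have Sc: "S \<subseteq> carrier G" using S subgroup.subset by blast
  have mem: "x \<in> center G <#> S \<longleftrightarrow> (\<exists>z\<in>center G. \<exists>k\<in>S. x = z \<otimes> k)" for x
    by (auto simp: set_mult_def)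
  show "center G <#> S \<subseteq> carrier G"
    using Sc center_carrier by (force simp: mem)
  have "\<one> \<in> center G" by (auto simp: center_def centralizer_def)
  thus "center G <#> S \<noteq> {}" using subgroup.one_closed[OF S] mem by blast
  fix x assume "x \<in> center G <#> S"
  then obtain z k where zk: "z \<in> center G" "k \<in> S" "x = z \<otimes> k" unfolding mem by blast
  have zc: "z \<in> carrier G" and kc: "k \<in> carrier G" using center_carrier[OF zk(1)] Sc zk(2) by auto
  have "inv x = inv z \<otimes> inv k"
    using zk(3) zc kc center_commute[OF center_inv[OF zk(1)], of "inv k"] by (simp add: inv_mult_group)
  moreover have "inv k \<in> S" using zk(2) subgroup.m_inv_closed[OF S] by blast
  ultimately show "inv x \<in> center G <#> S" using center_inv[OF zk(1)] mem by blast
  fix y assume "y \<in> center G <#> S"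
  then obtain z' k' where zk': "z' \<in> center G" "k' \<in> S" "y = z' \<otimes> k'" unfolding mem by blast
  have c': "z' \<in> carrier G" "k' \<in> carrier G" using center_carrier[OF zk'(1)] Sc zk'(2) by auto
  have "x \<otimes> y = z \<otimes> (k \<otimes> z') \<otimes> k'" using zk(3) zk'(3) zc kc c' by (simp add: m_assoc)
  also have "\<dots> = z \<otimes> (z' \<otimes> k) \<otimes> k'" using center_commute[OF zk'(1) kc] by simp
  also have "\<dots> = (z \<otimes> z') \<otimes> (k \<otimes> k')" using zc kc c' by (simp add: m_assoc)
  finally show "x \<otimes> y \<in> center G <#> S"
    using center_mult[OF zk(1) zk'(1)] subgroup.m_closed[OF S zk(2) zk'(2)] mem by blast
qed

definition conj_aut :: "('a, 'c) monoid_scheme \<Rightarrow> 'a \<Rightarrow> 'a \<Rightarrow> 'a" where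
  "conj_aut G g = (\<lambda>x\<in>carrier G. inv\<^bsub>G\<^esub> g \<otimes>\<^bsub>G\<^esub> x \<otimes>\<^bsub>G\<^esub> g)"

lemma (in group) Inn_conj_aut: "Inn G = {conj_aut G g | g. g \<in> carrier G}"
  by (simp add: Inn_def conj_aut_def)

lemma (in group) conj_aut_auto: assumes g: "g \<in> carrier G" shows "conj_aut G g \<in> auto G"
proof -
  have hom: "conj_aut G g \<in> hom G G"
    by (rule homI) (use g in \<open>auto simp: conj_aut_def m_assoc\<close>)
  have bij: "bij_betw (conj_aut G g) (carrier G) (carrier G)"
    by (rule bij_betw_byWitness[of _ "conj_aut G (inv\<^bsub>G\<^esub> g)"]) (use g in \<open>auto simp: conj_aut_def m_assoc\<close>)
  show ?thesis using hom bij by (simp add: auto_def Bij_def conj_aut_def)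
qed

lemma (in group) auto_ext: "f \<in> auto G \<Longrightarrow> f \<in> extensional (carrier G)"
  by (simp add: auto_def Bij_def)
lemma (in group) auto_hom: "f \<in> auto G \<Longrightarrow> f \<in> hom G G"
  by (simp add: auto_def)
lemma (in group) auto_carrier: "f \<in> auto G \<Longrightarrow> x \<in> carrier G \<Longrightarrow> f x \<in> carrier G"
  by (auto simp: auto_def hom_def)
lemma (in group) auto_bij: "f \<in> auto G \<Longrightarrow> bij_betw f (carrier G) (carrier G)"
  by (simp add: auto_def Bij_def)

lemma (in group) compose_auto: assumes f: "f \<in> auto G" and g: "g \<in> auto G" shows "compose (carrier G) f g \<in> auto G"
proof -
  have "f \<otimes>\<^bsub>BijGroup (carrier G)\<^esub> g \<in> auto G"
    using subgroup.m_closed[OF subgroup_auto f g] .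
  moreover have "f \<in> Bij (carrier G)" "g \<in> Bij (carrier G)" using f g by (auto simp: auto_def)
  ultimately show ?thesis by (simp add: BijGroup_def)
qed

lemma (in group) AutL_mult: "f \<in> auto G \<Longrightarrow> g \<in> auto G \<Longrightarrow> f \<otimes>\<^bsub>AutL G\<^esub> g = compose (carrier G) g f"
  by (auto simp: AutL_def AutoGroup_def BijGroup_def auto_def)

lemma (in group) outer_class_conj_aut: "f \<in> auto G \<Longrightarrow> outer_class G f = {compose (carrier G) f (conj_aut G g) | g. g \<in> carrier G}"
  by (auto simp: outer_class_def r_coset_def Inn_conj_aut AutL_mult conj_aut_auto)

lemma (in group) endo_hom_inv: "f \<in> hom G G \<Longrightarrow> x \<in> carrier G \<Longrightarrow> f (inv x) = inv (f x)"
  using group_hom.hom_inv[of G G f x] by (simp add: group_hom_def group_hom_axioms_def is_group)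

lemma (in group) compose_conj_aut: assumes f: "f \<in> auto G" and g: "g \<in> carrier G" and x: "x \<in> carrier G"
  shows "compose (carrier G) f (conj_aut G g) x = inv\<^bsub>G\<^esub> (f g) \<otimes>\<^bsub>G\<^esub> f x \<otimes>\<^bsub>G\<^esub> f g"
proof -
  show ?thesis using f g x auto_hom[OF f] endo_hom_inv[OF auto_hom[OF f]]
    by (simp add: compose_def conj_aut_def hom_mult)
qed

lemma (in group) compose_ext: "(\<And>x. x \<in> carrier G \<Longrightarrow> f1 (g1 x) = f2 (g2 x)) \<Longrightarrow> compose (carrier G) f1 g1 = compose (carrier G) f2 g2"
  unfolding compose_def by (rule restrict_ext) simp

lemma (in group) outer_class_self: assumes f: "f \<in> auto G" shows "f \<in> outer_class G f"
proof -
  have "compose (carrier G) f (conj_aut G \<one>\<^bsub>G\<^esub>) = f"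
  proof (rule extensionalityI[OF _ auto_ext[OF f]])
    show "compose (carrier G) f (conj_aut G \<one>\<^bsub>G\<^esub>) \<in> extensional (carrier G)" by (simp add: compose_def)
    fix x assume "x \<in> carrier G" thus "compose (carrier G) f (conj_aut G \<one>\<^bsub>G\<^esub>) x = f x"
      by (simp add: compose_def conj_aut_def)
  qed
  thus ?thesis using outer_class_conj_aut[OF f] by force
qed

lemma (in group) outer_class_compose_conj_aut: assumes f: "f \<in> auto G" and g: "g \<in> carrier G"
  shows "outer_class G (compose (carrier G) f (conj_aut G g)) = outer_class G f"
proof -
  have fg: "compose (carrier G) f (conj_aut G g) \<in> auto G" by (rule compose_auto[OF f conj_aut_auto[OF g]])
  have key: "compose (carrier G) (compose (carrier G) f (conj_aut G g)) (conj_aut G h) = compose (carrier G) f (conj_aut G (h \<otimes>\<^bsub>G\<^esub> g))"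
    if h: "h \<in> carrier G" for h
  proof (rule compose_ext)
    fix x assume x: "x \<in> carrier G"
    show "compose (carrier G) f (conj_aut G g) (conj_aut G h x) = f (conj_aut G (h \<otimes>\<^bsub>G\<^esub> g) x)"
      using x g h auto_carrier[OF f] by (simp add: compose_def conj_aut_def m_assoc inv_mult_group)
  qed
  show ?thesis
  proof
    show "outer_class G (compose (carrier G) f (conj_aut G g)) \<subseteq> outer_class G f"
      unfolding outer_class_conj_aut[OF fg] outer_class_conj_aut[OF f] using key g by fastforce
  next
    show "outer_class G f \<subseteq> outer_class G (compose (carrier G) f (conj_aut G g))"
    proof
      fix u assume "u \<in> outer_class G f"
      then obtain h where h: "h \<in> carrier G" "u = compose (carrier G) f (conj_aut G h)" using outer_class_conj_aut[OF f] by auto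
      have "h \<otimes>\<^bsub>G\<^esub> inv\<^bsub>G\<^esub> g \<otimes>\<^bsub>G\<^esub> g = h" using h g by (simp add: m_assoc)
      hence "u = compose (carrier G) (compose (carrier G) f (conj_aut G g)) (conj_aut G (h \<otimes>\<^bsub>G\<^esub> inv\<^bsub>G\<^esub> g))"
        using key[of "h \<otimes>\<^bsub>G\<^esub> inv\<^bsub>G\<^esub> g"] h g by simp
      thus "u \<in> outer_class G (compose (carrier G) f (conj_aut G g))"
        using outer_class_conj_aut[OF fg] h g by blast
    qed
  qed
qed

lemma (in group) outer_class_mult_subset: assumes f1: "f1 \<in> auto G" and f2: "f2 \<in> auto G"
  shows "outer_class G f1 <#>\<^bsub>AutL G\<^esub> outer_class G f2 \<subseteq> outer_class G (compose (carrier G) f2 f1)"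
proof
  fix u assume "u \<in> outer_class G f1 <#>\<^bsub>AutL G\<^esub> outer_class G f2"
  then obtain g1 g2 where g: "g1 \<in> carrier G" "g2 \<in> carrier G"
    and u: "u = compose (carrier G) f1 (conj_aut G g1) \<otimes>\<^bsub>AutL G\<^esub> compose (carrier G) f2 (conj_aut G g2)"
    unfolding set_mult_def outer_class_conj_aut[OF f1] outer_class_conj_aut[OF f2] by blast
  have a1: "compose (carrier G) f1 (conj_aut G g1) \<in> auto G" by (rule compose_auto[OF f1 conj_aut_auto[OF g(1)]])
  have a2: "compose (carrier G) f2 (conj_aut G g2) \<in> auto G" by (rule compose_auto[OF f2 conj_aut_auto[OF g(2)]])
  obtain y where y: "y \<in> carrier G" "f1 y = g2" using auto_bij[OF f1] g(2) by (metis bij_betw_iff_bijections)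
  have u2: "u = compose (carrier G) (compose (carrier G) f2 (conj_aut G g2)) (compose (carrier G) f1 (conj_aut G g1))"
    using u AutL_mult[OF a1 a2] by simp
  have "u = compose (carrier G) (compose (carrier G) f2 f1) (conj_aut G (g1 \<otimes>\<^bsub>G\<^esub> y))"
    unfolding u2
  proof (rule compose_ext)
    fix x assume x: "x \<in> carrier G"
    have e1: "f1 (conj_aut G (g1 \<otimes>\<^bsub>G\<^esub> y) x) = inv\<^bsub>G\<^esub> g2 \<otimes>\<^bsub>G\<^esub> f1 (conj_aut G g1 x) \<otimes>\<^bsub>G\<^esub> g2"
    proof -
      have "conj_aut G (g1 \<otimes>\<^bsub>G\<^esub> y) x = inv\<^bsub>G\<^esub> y \<otimes>\<^bsub>G\<^esub> conj_aut G g1 x \<otimes>\<^bsub>G\<^esub> y"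
        using x y g by (simp add: conj_aut_def m_assoc inv_mult_group)
      moreover have "conj_aut G g1 x \<in> carrier G" using x g by (simp add: conj_aut_def)
      ultimately show ?thesis using y auto_hom[OF f1] endo_hom_inv[OF auto_hom[OF f1]] by (simp add: hom_mult)
    qed
    have "conj_aut G g1 x \<in> carrier G" using x g by (simp add: conj_aut_def)
    hence "f1 (conj_aut G g1 x) \<in> carrier G" using auto_carrier[OF f1] by blast
    thus "compose (carrier G) f2 (conj_aut G g2) (compose (carrier G) f1 (conj_aut G g1) x) = compose (carrier G) f2 f1 (conj_aut G (g1 \<otimes>\<^bsub>G\<^esub> y) x)"
      using x g y e1 by (simp add: compose_def conj_aut_def)
  qed
  thus "u \<in> outer_class G (compose (carrier G) f2 f1)" using outer_class_conj_aut[OF compose_auto[OF f2 f1]] g y by blast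
qed

lemma (in group) outer_class_mult: assumes f1: "f1 \<in> auto G" and f2: "f2 \<in> auto G"
  shows "outer_class G f1 <#>\<^bsub>AutL G\<^esub> outer_class G f2 = outer_class G (compose (carrier G) f2 f1)"
proof (rule equalityI[OF outer_class_mult_subset[OF f1 f2]], rule subsetI)
  fix u assume "u \<in> outer_class G (compose (carrier G) f2 f1)"
  then obtain g where g: "g \<in> carrier G" "u = compose (carrier G) (compose (carrier G) f2 f1) (conj_aut G g)"
    using outer_class_conj_aut[OF compose_auto[OF f2 f1]] by auto
  have a1: "compose (carrier G) f1 (conj_aut G g) \<in> auto G" by (rule compose_auto[OF f1 conj_aut_auto[OF g(1)]])
  have a2: "compose (carrier G) f2 (conj_aut G \<one>\<^bsub>G\<^esub>) \<in> auto G" by (rule compose_auto[OF f2 conj_aut_auto]) simp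
  have "u = compose (carrier G) f1 (conj_aut G g) \<otimes>\<^bsub>AutL G\<^esub> compose (carrier G) f2 (conj_aut G \<one>\<^bsub>G\<^esub>)"
    unfolding AutL_mult[OF a1 a2] g(2)
  proof (rule compose_ext)
    fix x assume x: "x \<in> carrier G"
    have "conj_aut G g x \<in> carrier G" using x g by (simp add: conj_aut_def)
    hence "f1 (conj_aut G g x) \<in> carrier G" using auto_carrier[OF f1] by blast
    thus "compose (carrier G) f2 f1 (conj_aut G g x) = compose (carrier G) f2 (conj_aut G \<one>\<^bsub>G\<^esub>) (compose (carrier G) f1 (conj_aut G g) x)"
      using x g by (simp add: compose_def conj_aut_def)
  qed
  moreover have "compose (carrier G) f1 (conj_aut G g) \<in> outer_class G f1" using outer_class_conj_aut[OF f1] g by blast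
  moreover have "compose (carrier G) f2 (conj_aut G \<one>\<^bsub>G\<^esub>) \<in> outer_class G f2" using outer_class_conj_aut[OF f2] by force
  ultimately show "u \<in> outer_class G f1 <#>\<^bsub>AutL G\<^esub> outer_class G f2" unfolding set_mult_def by blast
qed

section \<open>The HNN extension as a group of word classes\<close>

fun hnn_letter_inv :: "('a,'m) monoid_scheme \<Rightarrow> 'a + bool \<Rightarrow> 'a + bool" where
  "hnn_letter_inv H (Inl h) = Inl (inv\<^bsub>H\<^esub> h)"
| "hnn_letter_inv H (Inr b) = Inr (\<not> b)"

definition hnn_word_inv :: "('a,'m) monoid_scheme \<Rightarrow> ('a + bool) list \<Rightarrow> ('a + bool) list" where
  "hnn_word_inv H w = rev (map (hnn_letter_inv H) w)"

text \<open>Letters outside H are sent to \<one>; words in hnn_words H contain none.\<close>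

definition hnn_eval_letter :: "('a,'m) monoid_scheme \<Rightarrow> ('b,'n) monoid_scheme \<Rightarrow> ('a \<Rightarrow> 'b) \<Rightarrow> 'b \<Rightarrow> 'a + bool \<Rightarrow> 'b" where
  "hnn_eval_letter H M f \<tau> l = (case l of Inl h \<Rightarrow> if h \<in> carrier H then f h else \<one>\<^bsub>M\<^esub> | Inr b \<Rightarrow> if b then \<tau> else inv\<^bsub>M\<^esub> \<tau>)"

definition hnn_eval :: "('a,'m) monoid_scheme \<Rightarrow> ('b,'n) monoid_scheme \<Rightarrow> ('a \<Rightarrow> 'b) \<Rightarrow> 'b \<Rightarrow> ('a + bool) list \<Rightarrow> 'b" where
  "hnn_eval H M f \<tau> w = foldr (\<lambda>l acc. hnn_eval_letter H M f \<tau> l \<otimes>\<^bsub>M\<^esub> acc) w \<one>\<^bsub>M\<^esub>"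

fun no_pinch :: "'a \<Rightarrow> ('a \<times> bool) list \<Rightarrow> bool" where
  "no_pinch u ((s2,e2)#(s1,e1)#L) = ((e2 = (\<not>e1) \<longrightarrow> s2 \<noteq> u) \<and> no_pinch u ((s1,e1)#L))"
| "no_pinch u _ = True"

definition syllable_word :: "('a \<times> bool) list \<Rightarrow> ('a + bool) list" where
  "syllable_word L = concat (map (\<lambda>(s,e). [Inl s, Inr e]) L)"

lemma syllable_word_simps[simp]: "syllable_word [] = []" "syllable_word (x # L) = [Inl (fst x), Inr (snd x)] @ syllable_word L"
  "syllable_word (L @ L') = syllable_word L @ syllable_word L'"
  by (auto simp: syllable_word_def split: prod.splits)

lemma no_pinch_tl: "no_pinch u (x # L) \<Longrightarrow> no_pinch u L"
  by (cases x; cases L) auto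

locale hnn = group H for H :: "('a, 'm) monoid_scheme" (structure) +
  fixes K :: "'a set" and \<phi> :: "'a \<Rightarrow> 'a"
  assumes K_sub: "subgroup K H" and K_ne: "K \<noteq> carrier H"
    and phi_hom: "\<phi> \<in> hom H H" and phi_bij: "bij_betw \<phi> (carrier H) (carrier H)"
begin

abbreviation "E \<equiv> hnn_eq H K \<phi>"
abbreviation "cls \<equiv> hnn_class H K \<phi>"
abbreviation "W \<equiv> hnn_words H"
abbreviation "G \<equiv> HNN H K \<phi>"
abbreviation "inc \<equiv> hnn_inc H K \<phi>"
abbreviation "t \<equiv> hnn_t H K \<phi>"

lemma phi_closed: "x \<in> carrier H \<Longrightarrow> \<phi> x \<in> carrier H"
  using phi_hom by (auto simp: hom_def)
lemma phi_mult: "x \<in> carrier H \<Longrightarrow> y \<in> carrier H \<Longrightarrow> \<phi> (x \<otimes> y) = \<phi> x \<otimes> \<phi> y"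
  using phi_hom by (auto simp: hom_def)
lemma K_carrier: "k \<in> K \<Longrightarrow> k \<in> carrier H"
  using K_sub subgroup.subset by blast

lemma hnn_eq_append_left: "E w v \<Longrightarrow> E (u @ w) (u @ v)"
  using hnn_eq.cong[of H K \<phi> w v u "[]"] by simp
lemma hnn_eq_append_right: "E w v \<Longrightarrow> E (w @ z) (v @ z)"
  using hnn_eq.cong[of H K \<phi> w v "[]" z] by simp
lemma hnn_eq_append: "E w w' \<Longrightarrow> E v v' \<Longrightarrow> E (w @ v) (w' @ v')"
  by (meson hnn_eq_append_left hnn_eq_append_right hnn_eq.trans)

lemma hnn_eq_context: "E w v \<Longrightarrow> x = u @ w @ z \<Longrightarrow> y = u @ v @ z \<Longrightarrow> E x y"
  using hnn_eq.cong by blast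

lemma hnn_words_append[simp]: "w @ v \<in> W \<longleftrightarrow> w \<in> W \<and> v \<in> W"
  by (auto simp: hnn_words_def)
lemma hnn_words_Cons[simp]: "a # v \<in> W \<longleftrightarrow> (case a of Inl h \<Rightarrow> h \<in> carrier H | Inr _ \<Rightarrow> True) \<and> v \<in> W"
  by (auto simp: hnn_words_def)
lemma hnn_words_Nil[simp]: "[] \<in> W" by (auto simp: hnn_words_def)

lemma hnn_class_self: "w \<in> W \<Longrightarrow> w \<in> cls w"
  by (simp add: hnn_class_def hnn_eq.refl)
lemma hnn_class_eq_iff: "w \<in> W \<Longrightarrow> v \<in> W \<Longrightarrow> cls w = cls v \<longleftrightarrow> E w v"
  unfolding hnn_class_def by (auto intro: hnn_eq.trans hnn_eq.sym hnn_eq.refl)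
lemma hnn_class_eqI: "E w v \<Longrightarrow> cls w = cls v"
  unfolding hnn_class_def by (auto intro: hnn_eq.trans hnn_eq.sym hnn_eq.refl)

lemma carrier_HNN: "carrier G = cls ` W" by (simp add: HNN_def)
lemma one_HNN: "\<one>\<^bsub>G\<^esub> = cls []" by (simp add: HNN_def)

lemma mult_HNN: assumes "w \<in> W" "v \<in> W" shows "cls w \<otimes>\<^bsub>G\<^esub> cls v = cls (w @ v)"
proof -
  define x where "x = (SOME x. x \<in> cls w)"
  define y where "y = (SOME y. y \<in> cls v)"
  have "x \<in> cls w" unfolding x_def by (rule someI, rule hnn_class_self[OF assms(1)])
  moreover have "y \<in> cls v" unfolding y_def by (rule someI, rule hnn_class_self[OF assms(2)])
  ultimately have "E w x" "E v y" by (auto simp: hnn_class_def)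
  hence "E (x @ y) (w @ v)" by (meson hnn_eq_append hnn_eq.sym)
  thus ?thesis by (simp add: HNN_def hnn_mult_def x_def[symmetric] y_def[symmetric] hnn_class_eqI)
qed

lemma hnn_eq_letter_inv: "[a] \<in> W \<Longrightarrow> E [hnn_letter_inv H a, a] []"
proof (cases a)
  case (Inl h)
  assume "[a] \<in> W"
  hence h: "h \<in> carrier H" using Inl by simp
  have "E [Inl (inv h), Inl h] [Inl (inv h \<otimes> h)]" by (rule hnn_eq.h_mult) (use h in auto)
  also have "inv h \<otimes> h = \<one>" using h by simp
  finally show ?thesis using Inl by (auto intro: hnn_eq.trans hnn_eq.h_one)
next
  case (Inr b) thus ?thesis by (cases b) (auto intro: hnn_eq.t_tinv hnn_eq.tinv_t)
qed

lemma hnn_word_inv_words: "w \<in> W \<Longrightarrow> hnn_word_inv H w \<in> W"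
proof (induction w)
  case (Cons a w)
  have "[hnn_letter_inv H a] \<in> W" using Cons.prems by (cases a) (auto)
  thus ?case using Cons by (auto simp: hnn_word_inv_def)
qed (simp add: hnn_word_inv_def)

lemma hnn_eq_word_inv: "w \<in> W \<Longrightarrow> E (hnn_word_inv H w @ w) []"
proof (induction w)
  case Nil thus ?case by (simp add: hnn_word_inv_def hnn_eq.refl)
next
  case (Cons a w)
  have "hnn_word_inv H (a # w) @ a # w = hnn_word_inv H w @ ([hnn_letter_inv H a, a] @ w)" by (simp add: hnn_word_inv_def)
  moreover have "E (hnn_word_inv H w @ ([hnn_letter_inv H a, a] @ w)) (hnn_word_inv H w @ ([] @ w))"
    by (rule hnn_eq_append_left, rule hnn_eq_append_right, rule hnn_eq_letter_inv) (use Cons.prems in simp)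
  ultimately show ?case using Cons by (auto intro: hnn_eq.trans)
qed

lemma group_HNN: "group G"
proof (rule groupI)
  show "\<one>\<^bsub>G\<^esub> \<in> carrier G" by (simp add: carrier_HNN one_HNN)
next
  fix x y assume "x \<in> carrier G" "y \<in> carrier G"
  thus "x \<otimes>\<^bsub>G\<^esub> y \<in> carrier G" by (auto simp: carrier_HNN mult_HNN)
next
  fix x y z assume "x \<in> carrier G" "y \<in> carrier G" "z \<in> carrier G"
  thus "x \<otimes>\<^bsub>G\<^esub> y \<otimes>\<^bsub>G\<^esub> z = x \<otimes>\<^bsub>G\<^esub> (y \<otimes>\<^bsub>G\<^esub> z)" by (auto simp: carrier_HNN mult_HNN)
next
  fix x assume "x \<in> carrier G"
  thus "\<one>\<^bsub>G\<^esub> \<otimes>\<^bsub>G\<^esub> x = x" by (auto simp: carrier_HNN one_HNN mult_HNN)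
next
  fix x assume "x \<in> carrier G"
  then obtain w where w: "w \<in> W" "x = cls w" by (auto simp: carrier_HNN)
  show "\<exists>y\<in>carrier G. y \<otimes>\<^bsub>G\<^esub> x = \<one>\<^bsub>G\<^esub>"
  proof (rule bexI[of _ "cls (hnn_word_inv H w)"])
    show "cls (hnn_word_inv H w) \<in> carrier G" using w hnn_word_inv_words by (simp add: carrier_HNN)
    have "cls (hnn_word_inv H w @ w) = cls []" by (rule hnn_class_eqI, rule hnn_eq_word_inv, rule w(1))
    thus "cls (hnn_word_inv H w) \<otimes>\<^bsub>G\<^esub> x = \<one>\<^bsub>G\<^esub>" using w hnn_word_inv_words by (simp add: mult_HNN one_HNN)
  qed
qed

end

sublocale hnn \<subseteq> HNN: group "HNN H K \<phi>"
  by (rule group_HNN)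

context hnn
begin

lemma hnn_inc_carrier: "h \<in> carrier H \<Longrightarrow> inc h \<in> carrier G"
  by (auto simp: hnn_inc_def carrier_HNN)
lemma hnn_t_carrier: "t \<in> carrier G"
  by (auto simp: hnn_t_def carrier_HNN)
lemma hnn_inc_mult: "h \<in> carrier H \<Longrightarrow> h' \<in> carrier H \<Longrightarrow> inc h \<otimes>\<^bsub>G\<^esub> inc h' = inc (h \<otimes> h')"
  by (auto simp: hnn_inc_def mult_HNN intro!: hnn_class_eqI hnn_eq.h_mult)
lemma hnn_inc_hom: "inc \<in> hom H G"
  by (auto simp: hom_def hnn_inc_carrier hnn_inc_mult)
lemma hnn_inc_one: "inc \<one> = \<one>\<^bsub>G\<^esub>"
  by (auto simp: hnn_inc_def one_HNN intro!: hnn_class_eqI hnn_eq.h_one)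
lemma inv_hnn_t: "inv\<^bsub>G\<^esub> t = cls [Inr False]"
proof -
  have "cls [Inr False] \<otimes>\<^bsub>G\<^esub> t = \<one>\<^bsub>G\<^esub>"
    by (auto simp: hnn_t_def mult_HNN one_HNN intro!: hnn_class_eqI hnn_eq.tinv_t)
  thus ?thesis using hnn_t_carrier by (metis HNN.inv_equality hnn_words_Cons hnn_words_Nil carrier_HNN imageI sum.case(2))
qed
lemma hnn_inc_inv: "h \<in> carrier H \<Longrightarrow> inv\<^bsub>G\<^esub> (inc h) = inc (inv h)"
  using group_hom.hom_inv[of H G inc h] hnn_inc_hom group_HNN by (simp add: group_hom_def group_hom_axioms_def is_group)
lemma hnn_t_conj: "k \<in> K \<Longrightarrow> t \<otimes>\<^bsub>G\<^esub> inc k \<otimes>\<^bsub>G\<^esub> inv\<^bsub>G\<^esub> t = inc (\<phi> k)"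
  unfolding inv_hnn_t using K_carrier[of k] by (auto simp: hnn_t_def hnn_inc_def mult_HNN intro!: hnn_class_eqI hnn_eq.rel)

lemma hnn_class_Cons: "l # w \<in> W \<Longrightarrow> cls (l # w) = cls [l] \<otimes>\<^bsub>G\<^esub> cls w"
  by (subst mult_HNN) (auto split: sum.splits)

lemma hnn_class_letter: "[l] \<in> W \<Longrightarrow> cls [l] = (case l of Inl h \<Rightarrow> inc h | Inr b \<Rightarrow> if b then t else inv\<^bsub>G\<^esub> t)"
  using inv_hnn_t by (auto simp: hnn_inc_def hnn_t_def split: sum.splits)

lemma HNN_induct[consumes 1, case_names one inc t tinv]:
  assumes "x \<in> carrier G"
    and "P \<one>\<^bsub>G\<^esub>"
    and "\<And>h y. h \<in> carrier H \<Longrightarrow> y \<in> carrier G \<Longrightarrow> P y \<Longrightarrow> P (inc h \<otimes>\<^bsub>G\<^esub> y)"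
    and "\<And>y. y \<in> carrier G \<Longrightarrow> P y \<Longrightarrow> P (t \<otimes>\<^bsub>G\<^esub> y)"
    and "\<And>y. y \<in> carrier G \<Longrightarrow> P y \<Longrightarrow> P (inv\<^bsub>G\<^esub> t \<otimes>\<^bsub>G\<^esub> y)"
  shows "P x"
proof -
  obtain w where w: "w \<in> W" "x = cls w" using assms(1) by (auto simp: carrier_HNN)
  have "P (cls w)" using w(1)
  proof (induction w)
    case Nil thus ?case using assms(2) by (simp add: one_HNN)
  next
    case (Cons l w)
    have wW: "w \<in> W" and cw: "cls w \<in> carrier G" using Cons.prems by (auto simp: carrier_HNN)
    have lW: "[l] \<in> W" using Cons.prems by (auto split: sum.splits)
    have eq: "cls (l # w) = cls [l] \<otimes>\<^bsub>G\<^esub> cls w" by (rule hnn_class_Cons[OF Cons.prems])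
    show ?case
    proof (cases l)
      case (Inl h) thus ?thesis using eq hnn_class_letter[OF lW] assms(3)[of h "cls w"] lW cw Cons.IH[OF wW] by simp
    next
      case (Inr b) thus ?thesis using eq hnn_class_letter[OF lW] assms(4,5)[of "cls w"] cw Cons.IH[OF wW] by (cases b) simp_all
    qed
  qed
  thus ?thesis using w by simp
qed

lemma HNN_hom_eqI:
  assumes M: "group M" and F1: "F1 \<in> hom G M" and F2: "F2 \<in> hom G M"
    and hH: "\<And>h. h \<in> carrier H \<Longrightarrow> F1 (inc h) = F2 (inc h)" and ht: "F1 t = F2 t"
    and x: "x \<in> carrier G"
  shows "F1 x = F2 x"
proof -
  interpret M: group M by (rule M)
  have gh1: "group_hom G M F1" and gh2: "group_hom G M F2"
    using F1 F2 by (auto simp: group_hom_def group_hom_axioms_def HNN.is_group M.is_group)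
  show ?thesis using x
  proof (induction x rule: HNN_induct)
    case one thus ?case using group_hom.hom_one[OF gh1] group_hom.hom_one[OF gh2] by simp
  next
    case (inc h y) thus ?case using F1 F2 hH hnn_inc_carrier by (simp add: hom_mult)
  next
    case (t y) thus ?case using F1 F2 ht hnn_t_carrier by (simp add: hom_mult)
  next
    case (tinv y) thus ?case using F1 F2 ht hnn_t_carrier group_hom.hom_inv[OF gh1] group_hom.hom_inv[OF gh2]
      by (simp add: hom_mult)
  qed
qed

lemma phi_inv: "x \<in> carrier H \<Longrightarrow> \<phi> (inv x) = inv (\<phi> x)"
  using group_hom.hom_inv[of H H \<phi> x] phi_hom by (simp add: group_hom_def group_hom_axioms_def is_group)
lemma phi_one: "\<phi> \<one> = \<one>"
  using phi_hom by (simp add: hom_one is_monoid)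

lemma K_subset: "K \<subseteq> carrier H" using K_sub subgroup.subset by blast

lemma subgroup_normalizer: "subgroup (normalizer H K) H"
  by (rule normalizer_imp_subgroup[OF K_subset])

lemma normalizer_carrier: "b \<in> normalizer H K \<Longrightarrow> b \<in> carrier H"
  using subgroup_normalizer subgroup.subset by blast

lemma phi_K_subset: "\<phi> ` K \<subseteq> carrier H" using K_subset phi_closed by blast

section \<open>The universal property\<close>

definition hnn_lift :: "('b, 'n) monoid_scheme \<Rightarrow> ('a \<Rightarrow> 'b) \<Rightarrow> 'b \<Rightarrow> ('a + bool) list set \<Rightarrow> 'b" where
  "hnn_lift M f \<tau> = restrict (\<lambda>A. hnn_eval H M f \<tau> (SOME w. w \<in> A)) (carrier G)"

context
  fixes M :: "('b, 'n) monoid_scheme" and f :: "'a \<Rightarrow> 'b" and \<tau> :: 'b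
  assumes M: "group M" and f: "f \<in> hom H M" and \<tau>: "\<tau> \<in> carrier M"
    and frel: "\<And>k. k \<in> K \<Longrightarrow> \<tau> \<otimes>\<^bsub>M\<^esub> f k \<otimes>\<^bsub>M\<^esub> inv\<^bsub>M\<^esub> \<tau> = f (\<phi> k)"
begin

interpretation M: group M by (rule M)

lemma hnn_eval_letter_closed: "hnn_eval_letter H M f \<tau> l \<in> carrier M"
  using f \<tau> by (auto simp: hnn_eval_letter_def hom_def split: sum.splits)
lemma hnn_eval_closed: "hnn_eval H M f \<tau> w \<in> carrier M"
  by (induction w) (auto simp: hnn_eval_def hnn_eval_letter_closed)
lemma hnn_eval_append: "hnn_eval H M f \<tau> (w @ v) = hnn_eval H M f \<tau> w \<otimes>\<^bsub>M\<^esub> hnn_eval H M f \<tau> v"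
proof (induction w)
  case Nil thus ?case using hnn_eval_closed by (simp add: hnn_eval_def)
next
  case (Cons l w)
  have "hnn_eval H M f \<tau> ((l # w) @ v) = hnn_eval_letter H M f \<tau> l \<otimes>\<^bsub>M\<^esub> hnn_eval H M f \<tau> (w @ v)" by (simp add: hnn_eval_def)
  also have "\<dots> = hnn_eval_letter H M f \<tau> l \<otimes>\<^bsub>M\<^esub> (hnn_eval H M f \<tau> w \<otimes>\<^bsub>M\<^esub> hnn_eval H M f \<tau> v)" using Cons by simp
  also have "\<dots> = (hnn_eval_letter H M f \<tau> l \<otimes>\<^bsub>M\<^esub> hnn_eval H M f \<tau> w) \<otimes>\<^bsub>M\<^esub> hnn_eval H M f \<tau> v"
    using hnn_eval_letter_closed hnn_eval_closed by (simp add: M.m_assoc)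
  finally show ?case by (simp add: hnn_eval_def)
qed
lemma hnn_eval_single: "hnn_eval H M f \<tau> [l] = hnn_eval_letter H M f \<tau> l"
  using hnn_eval_letter_closed by (simp add: hnn_eval_def)

lemma hnn_eq_eval: "E w v \<Longrightarrow> hnn_eval H M f \<tau> w = hnn_eval H M f \<tau> v"
proof (induction rule: hnn_eq.induct)
  case (cong w v u z) thus ?case by (simp add: hnn_eval_append)
next
  case (h_mult h h')
  hence "f h' \<in> carrier M" "f h \<in> carrier M" using f by (auto simp: hom_def)
  thus ?case using f h_mult by (simp add: hnn_eval_def hnn_eval_letter_def hom_def M.m_closed)
next
  case h_one thus ?case using f by (simp add: hnn_eval_single hnn_eval_letter_def hom_one M.is_monoid is_monoid)
       (simp add: hnn_eval_def)
next
  case t_tinv thus ?case using \<tau> by (simp add: hnn_eval_def hnn_eval_letter_def)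
next
  case tinv_t thus ?case using \<tau> by (simp add: hnn_eval_def hnn_eval_letter_def)
next
  case (rel k)
  have kc: "k \<in> carrier H" using K_carrier rel by simp
  have "hnn_eval H M f \<tau> [Inr True, Inl k, Inr False] = \<tau> \<otimes>\<^bsub>M\<^esub> f k \<otimes>\<^bsub>M\<^esub> inv\<^bsub>M\<^esub> \<tau>"
  proof -
    have "f k \<in> carrier M" using kc f by (auto simp: hom_def)
    thus ?thesis using kc \<tau> by (simp add: hnn_eval_def hnn_eval_letter_def M.m_assoc)
  qed
  thus ?case using frel[OF rel] kc phi_closed[OF kc] by (simp add: hnn_eval_single hnn_eval_letter_def)
qed (auto)

lemma hnn_lift_class: "w \<in> W \<Longrightarrow> hnn_lift M f \<tau> (cls w) = hnn_eval H M f \<tau> w"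
proof -
  assume w: "w \<in> W"
  have "(SOME v. v \<in> cls w) \<in> cls w" by (rule someI, rule hnn_class_self[OF w])
  hence "E w (SOME v. v \<in> cls w)" by (simp add: hnn_class_def)
  thus ?thesis using w by (auto simp: hnn_lift_def carrier_HNN hnn_eq_eval)
qed

lemma hnn_lift_hom: "hnn_lift M f \<tau> \<in> hom G M"
  by (auto simp: hom_def carrier_HNN hnn_lift_class hnn_eval_closed mult_HNN hnn_eval_append)

lemma hnn_lift_inc: "h \<in> carrier H \<Longrightarrow> hnn_lift M f \<tau> (inc h) = f h"
  by (simp add: hnn_inc_def hnn_lift_class hnn_eval_single hnn_eval_letter_def)
lemma hnn_lift_t: "hnn_lift M f \<tau> t = \<tau>"
  by (simp add: hnn_t_def hnn_lift_class hnn_eval_single hnn_eval_letter_def)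
lemma hnn_lift_extensional: "hnn_lift M f \<tau> \<in> extensional (carrier G)"
  by (simp add: hnn_lift_def)

end

section \<open>The automorphisms \<alpha>(\<delta>, a)\<close>

text \<open>The last conjunct is the paper's condition \<phi>(\<delta> k) = a\<inverse> \<delta>(\<phi> k) a; it says exactly that
  h \<mapsto> \<delta> h, t \<mapsto> a t respects the relations t k t\<inverse> = \<phi> k.\<close>

definition "alpha_admissible \<delta> a \<longleftrightarrow> \<delta> \<in> hom H H \<and> a \<in> carrier H \<and> (\<forall>k\<in>K. \<delta> k \<in> K \<and> a \<otimes> \<phi> (\<delta> k) \<otimes> inv a = \<delta> (\<phi> k))"

definition "alpha_lift \<delta> a = hnn_lift G (\<lambda>h. inc (\<delta> h)) (inc a \<otimes>\<^bsub>G\<^esub> t)"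

lemma alpha_lift_props:
  assumes P: "alpha_admissible \<delta> a"
  shows "alpha_lift \<delta> a \<in> hom G G" "\<And>h. h \<in> carrier H \<Longrightarrow> alpha_lift \<delta> a (inc h) = inc (\<delta> h)"
    "alpha_lift \<delta> a t = inc a \<otimes>\<^bsub>G\<^esub> t" "alpha_lift \<delta> a \<in> extensional (carrier G)"
proof -
  have dh: "\<delta> \<in> hom H H" and a: "a \<in> carrier H" using P by (auto simp: alpha_admissible_def)
  have dc: "\<And>x. x \<in> carrier H \<Longrightarrow> \<delta> x \<in> carrier H" using dh by (auto simp: hom_def)
  have f: "(\<lambda>h. inc (\<delta> h)) \<in> hom H G"
  proof (rule homI)
    fix x assume "x \<in> carrier H" thus "inc (\<delta> x) \<in> carrier G" using dc hnn_inc_carrier by blast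
  next
    fix x y assume "x \<in> carrier H" "y \<in> carrier H"
    thus "inc (\<delta> (x \<otimes> y)) = inc (\<delta> x) \<otimes>\<^bsub>G\<^esub> inc (\<delta> y)"
      using dc dh by (simp add: hom_mult hnn_inc_mult)
  qed
  have tau: "inc a \<otimes>\<^bsub>G\<^esub> t \<in> carrier G" using a hnn_inc_carrier hnn_t_carrier by simp
  have frel: "(inc a \<otimes>\<^bsub>G\<^esub> t) \<otimes>\<^bsub>G\<^esub> inc (\<delta> k) \<otimes>\<^bsub>G\<^esub> inv\<^bsub>G\<^esub> (inc a \<otimes>\<^bsub>G\<^esub> t) = inc (\<delta> (\<phi> k))"
    if k: "k \<in> K" for k
  proof -
    have dk: "\<delta> k \<in> K" and eq: "a \<otimes> \<phi> (\<delta> k) \<otimes> inv a = \<delta> (\<phi> k)" using P k by (auto simp: alpha_admissible_def)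
    have dkc: "\<delta> k \<in> carrier H" using K_carrier dk by blast
    have "(inc a \<otimes>\<^bsub>G\<^esub> t) \<otimes>\<^bsub>G\<^esub> inc (\<delta> k) \<otimes>\<^bsub>G\<^esub> inv\<^bsub>G\<^esub> (inc a \<otimes>\<^bsub>G\<^esub> t)
        = inc a \<otimes>\<^bsub>G\<^esub> (t \<otimes>\<^bsub>G\<^esub> inc (\<delta> k) \<otimes>\<^bsub>G\<^esub> inv\<^bsub>G\<^esub> t) \<otimes>\<^bsub>G\<^esub> inv\<^bsub>G\<^esub> (inc a)"
      using a dkc hnn_inc_carrier hnn_t_carrier by (simp add: HNN.inv_mult_group HNN.m_assoc)
    also have "\<dots> = inc a \<otimes>\<^bsub>G\<^esub> inc (\<phi> (\<delta> k)) \<otimes>\<^bsub>G\<^esub> inc (inv a)"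
      using hnn_t_conj[OF dk] hnn_inc_inv[OF a] by simp
    also have "\<dots> = inc (a \<otimes> \<phi> (\<delta> k) \<otimes> inv a)" using a dkc phi_closed by (simp add: hnn_inc_mult)
    finally show ?thesis using eq by simp
  qed
  show "alpha_lift \<delta> a \<in> hom G G" unfolding alpha_lift_def by (rule hnn_lift_hom[OF group_HNN f tau frel])
  show "\<And>h. h \<in> carrier H \<Longrightarrow> alpha_lift \<delta> a (inc h) = inc (\<delta> h)" unfolding alpha_lift_def by (rule hnn_lift_inc[OF group_HNN f tau frel])
  show "alpha_lift \<delta> a t = inc a \<otimes>\<^bsub>G\<^esub> t" unfolding alpha_lift_def by (rule hnn_lift_t[OF group_HNN f tau frel])
  show "alpha_lift \<delta> a \<in> extensional (carrier G)" unfolding alpha_lift_def by (rule hnn_lift_extensional[OF group_HNN f tau frel])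
qed

definition "is_alpha \<delta> a F \<longleftrightarrow> F \<in> auto G \<and> (\<forall>h \<in> carrier H. F (inc h) = inc (\<delta> h)) \<and> F t = inc a \<otimes>\<^bsub>G\<^esub> t"

lemma is_alpha_unique:
  assumes "is_alpha \<delta> a F1" "is_alpha \<delta> a F2" shows "F1 = F2"
proof (rule extensionalityI)
  show "F1 \<in> extensional (carrier G)" "F2 \<in> extensional (carrier G)"
    using assms by (auto simp: is_alpha_def auto_def Bij_def)
  fix x assume "x \<in> carrier G"
  have "F1 \<in> hom G G" "F2 \<in> hom G G" using assms by (auto simp: is_alpha_def auto_def)
  thus "F1 x = F2 x" using HNN_hom_eqI[OF group_HNN, of F1 F2] assms \<open>x \<in> carrier G\<close> by (auto simp: is_alpha_def)
qed

lemma alpha_lift_inverse: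
  assumes P: "alpha_admissible \<delta> a" and P': "alpha_admissible \<delta>' a'"
    and inv: "\<And>h. h \<in> carrier H \<Longrightarrow> \<delta>' (\<delta> h) = h" and aa: "\<delta>' a \<otimes> a' = \<one>"
    and x: "x \<in> carrier G"
  shows "alpha_lift \<delta>' a' (alpha_lift \<delta> a x) = x"
proof -
  have a: "a \<in> carrier H" and dc: "\<And>x. x \<in> carrier H \<Longrightarrow> \<delta> x \<in> carrier H"
    using P by (auto simp: alpha_admissible_def hom_def)
  have a': "a' \<in> carrier H" and dc': "\<And>x. x \<in> carrier H \<Longrightarrow> \<delta>' x \<in> carrier H"
    using P' by (auto simp: alpha_admissible_def hom_def)
  note F = alpha_lift_props[OF P] and F' = alpha_lift_props[OF P']
  define idG where "idG = (\<lambda>x\<in>carrier G. x)"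
  have "compose (carrier G) (alpha_lift \<delta>' a') (alpha_lift \<delta> a) x = idG x"
  proof (rule HNN_hom_eqI[OF group_HNN _ _ _ _ x])
    show "compose (carrier G) (alpha_lift \<delta>' a') (alpha_lift \<delta> a) \<in> hom G G"
      using F(1) F'(1) HNN.hom_compose by blast
    show "idG \<in> hom G G" by (auto simp: idG_def hom_def)
    show "compose (carrier G) (alpha_lift \<delta>' a') (alpha_lift \<delta> a) (inc h) = idG (inc h)" if "h \<in> carrier H" for h
      using that F(2) F'(2) hnn_inc_carrier dc inv by (simp add: compose_def idG_def)
    have "alpha_lift \<delta>' a' (inc a \<otimes>\<^bsub>G\<^esub> t) = inc (\<delta>' a) \<otimes>\<^bsub>G\<^esub> (inc a' \<otimes>\<^bsub>G\<^esub> t)"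
      using F'(1,2,3) a hnn_inc_carrier hnn_t_carrier by (simp add: hom_mult)
    also have "\<dots> = t" using a a' dc' aa hnn_inc_carrier hnn_t_carrier hnn_inc_one
      by (simp add: HNN.m_assoc[symmetric] hnn_inc_mult)
    finally show "compose (carrier G) (alpha_lift \<delta>' a') (alpha_lift \<delta> a) t = idG t"
      using F(3) hnn_t_carrier by (simp add: compose_def idG_def)
  qed
  thus ?thesis using x by (simp add: compose_def idG_def)
qed

lemma hnn_alpha_is_alpha:
  assumes P: "alpha_admissible \<delta> a" and P': "alpha_admissible \<delta>' a'"
    and inv1: "\<And>h. h \<in> carrier H \<Longrightarrow> \<delta>' (\<delta> h) = h" and inv2: "\<And>h. h \<in> carrier H \<Longrightarrow> \<delta> (\<delta>' h) = h"
    and aa: "\<delta>' a \<otimes> a' = \<one>"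
  shows "is_alpha \<delta> a (hnn_alpha H K \<phi> \<delta> a)"
proof -
  have dh: "\<delta> \<in> hom H H" and a: "a \<in> carrier H" using P by (auto simp: alpha_admissible_def)
  have a': "a' \<in> carrier H" and dc': "\<And>x. x \<in> carrier H \<Longrightarrow> \<delta>' x \<in> carrier H"
    using P' by (auto simp: alpha_admissible_def hom_def)
  have "\<delta> (\<delta>' a \<otimes> a') = \<delta> \<one>" using aa by simp
  hence "a \<otimes> \<delta> a' = \<one>" using dh a a' dc' inv2 by (simp add: hom_mult hom_one is_monoid)
  moreover have "\<delta> a' \<in> carrier H" using a' dh by (auto simp: hom_def)
  ultimately have da': "\<delta> a' \<otimes> a = \<one>" using a by (simp add: inv_comm)
  note F = alpha_lift_props[OF P] and F' = alpha_lift_props[OF P']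
  have bij: "bij_betw (alpha_lift \<delta> a) (carrier G) (carrier G)"
    by (rule bij_betw_byWitness[of _ "alpha_lift \<delta>' a'"])
      (use alpha_lift_inverse[OF P P' inv1 aa] alpha_lift_inverse[OF P' P inv2 da'] F(1) F'(1)
        in \<open>auto simp: hom_def\<close>)
  have alpha: "is_alpha \<delta> a (alpha_lift \<delta> a)"
    using F bij by (auto simp: is_alpha_def auto_def Bij_def)
  have "hnn_alpha H K \<phi> \<delta> a = alpha_lift \<delta> a"
    unfolding hnn_alpha_def
    by (rule the_equality) (use alpha is_alpha_unique in \<open>auto simp: is_alpha_def\<close>)
  thus ?thesis using alpha by simp
qed

definition "outV_pair b a \<longleftrightarrow> b \<in> normalizer H K \<and> a \<in> carrier H \<and> b \<otimes> a \<otimes> inv (\<phi> b) \<in> centralizer H (\<phi> ` K)"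
definition "alpha b a = hnn_alpha H K \<phi> (conjH H b) a"

lemma conjH_hom: "b \<in> carrier H \<Longrightarrow> conjH H b \<in> hom H H"
  by (rule homI) (auto simp: conjH_def m_assoc)

lemma conjH_closed: "b \<in> carrier H \<Longrightarrow> h \<in> carrier H \<Longrightarrow> conjH H b h \<in> carrier H"
  by (simp add: conjH_def)

lemma alpha_admissible_inverse:
  assumes P: "alpha_admissible \<delta> a" and dh': "\<delta>' \<in> hom H H" and dK: "\<And>k. k \<in> K \<Longrightarrow> \<delta>' k \<in> K"
    and inv1: "\<And>h. h \<in> carrier H \<Longrightarrow> \<delta>' (\<delta> h) = h" and inv2: "\<And>h. h \<in> carrier H \<Longrightarrow> \<delta> (\<delta>' h) = h"
  shows "alpha_admissible \<delta>' (inv (\<delta>' a))"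
proof -
  have a: "a \<in> carrier H" using P by (simp add: alpha_admissible_def)
  have dc': "\<And>x. x \<in> carrier H \<Longrightarrow> \<delta>' x \<in> carrier H" using dh' by (auto simp: hom_def)
  have gh: "group_hom H H \<delta>'" using dh' by (simp add: group_hom_def group_hom_axioms_def is_group)
  show ?thesis unfolding alpha_admissible_def
  proof (intro conjI ballI)
    show "\<delta>' \<in> hom H H" by (rule dh')
    show "inv (\<delta>' a) \<in> carrier H" using a dc' by simp
    fix k assume k: "k \<in> K"
    show "\<delta>' k \<in> K" by (rule dK[OF k])
    have kc: "k \<in> carrier H" using k K_subset by blast
    have "a \<otimes> \<phi> (\<delta> (\<delta>' k)) \<otimes> inv a = \<delta> (\<phi> (\<delta>' k))" using P dK[OF k] by (simp add: alpha_admissible_def)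
    hence "a \<otimes> \<phi> k \<otimes> inv a = \<delta> (\<phi> (\<delta>' k))" using inv2 kc by simp
    hence "\<delta>' (a \<otimes> \<phi> k \<otimes> inv a) = \<phi> (\<delta>' k)" using inv1 phi_closed dc' kc by simp
    hence eq: "\<delta>' a \<otimes> \<delta>' (\<phi> k) \<otimes> inv (\<delta>' a) = \<phi> (\<delta>' k)"
      using a kc phi_closed dh' group_hom.hom_inv[OF gh] by (simp add: hom_mult)
    have "inv (\<delta>' a) \<otimes> \<phi> (\<delta>' k) \<otimes> inv (inv (\<delta>' a)) = inv (\<delta>' a) \<otimes> (\<delta>' a \<otimes> \<delta>' (\<phi> k) \<otimes> inv (\<delta>' a)) \<otimes> \<delta>' a"
      using eq a dc' by simp
    also have "\<dots> = \<delta>' (\<phi> k)" using a dc' kc phi_closed by (simp add: m_assoc)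
    finally show "inv (\<delta>' a) \<otimes> \<phi> (\<delta>' (k)) \<otimes> inv (inv (\<delta>' a)) = \<delta>' (\<phi> k)" .
  qed
qed

lemma alpha_admissible_conjH: assumes c: "outV_pair b a" shows "alpha_admissible (conjH H b) a"
proof -
  have bN: "b \<in> normalizer H K" and a: "a \<in> carrier H" and cC: "b \<otimes> a \<otimes> inv (\<phi> b) \<in> centralizer H (\<phi> ` K)"
    using c by (auto simp: outV_pair_def)
  have b: "b \<in> carrier H" by (rule normalizer_carrier[OF bN])
  have pb: "\<phi> b \<in> carrier H" using b phi_closed by simp
  show ?thesis unfolding alpha_admissible_def
  proof (intro conjI ballI)
    show "conjH H b \<in> hom H H" by (rule conjH_hom[OF b])
    show "a \<in> carrier H" by (rule a)
    fix k assume k: "k \<in> K"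
    have kc: "k \<in> carrier H" using k K_subset by blast
    have pk: "\<phi> k \<in> carrier H" using kc phi_closed by simp
    show "conjH H b k \<in> K" using normalizer_conj(2)[OF K_subset bN k] by (simp add: conjH_def)
    have phc: "\<phi> (conjH H b k) = inv (\<phi> b) \<otimes> \<phi> k \<otimes> \<phi> b"
      using b kc by (simp add: conjH_def phi_mult phi_inv)
    define c where "c = b \<otimes> a \<otimes> inv (\<phi> b)"
    have cc: "c \<in> carrier H" using b a pb by (simp add: c_def)
    have comm: "c \<otimes> \<phi> k = \<phi> k \<otimes> c" using cC k by (simp add: c_def centralizer_def)
    have "b \<otimes> (a \<otimes> (inv (\<phi> b) \<otimes> \<phi> k \<otimes> \<phi> b) \<otimes> inv a) \<otimes> inv b = c \<otimes> \<phi> k \<otimes> inv c"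
      using b a pb pk by (simp add: c_def m_assoc inv_mult_group)
    also have "\<dots> = \<phi> k" using comm cc pk by (simp add: m_assoc)
    finally have "b \<otimes> (a \<otimes> (inv (\<phi> b) \<otimes> \<phi> k \<otimes> \<phi> b) \<otimes> inv a) \<otimes> inv b = \<phi> k" .
    hence "inv b \<otimes> (b \<otimes> (a \<otimes> (inv (\<phi> b) \<otimes> \<phi> k \<otimes> \<phi> b) \<otimes> inv a) \<otimes> inv b) \<otimes> b = inv b \<otimes> \<phi> k \<otimes> b"
      by simp
    hence "a \<otimes> (inv (\<phi> b) \<otimes> \<phi> k \<otimes> \<phi> b) \<otimes> inv a = inv b \<otimes> \<phi> k \<otimes> b"
      using b a pb pk by (simp add: m_assoc)
    thus "a \<otimes> \<phi> (conjH H b k) \<otimes> inv a = conjH H b (\<phi> k)" using phc by (simp add: conjH_def)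
  qed
qed

lemma is_alpha_alpha: assumes c: "outV_pair b a" shows "is_alpha (conjH H b) a (alpha b a)"
proof -
  have bN: "b \<in> normalizer H K" using c by (simp add: outV_pair_def)
  have b: "b \<in> carrier H" by (rule normalizer_carrier[OF bN])
  have ib: "inv b \<in> normalizer H K" using bN subgroup_normalizer subgroup.m_inv_closed by fastforce
  have P: "alpha_admissible (conjH H b) a" by (rule alpha_admissible_conjH[OF c])
  have inv1: "conjH H (inv b) (conjH H b h) = h" if "h \<in> carrier H" for h
    using that b by (simp add: conjH_def m_assoc)
  have inv2: "conjH H b (conjH H (inv b) h) = h" if "h \<in> carrier H" for h
    using that b by (simp add: conjH_def m_assoc)
  have dK: "conjH H (inv b) k \<in> K" if "k \<in> K" for k
    using normalizer_conj(1)[OF K_subset bN that] b by (simp add: conjH_def)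
  have P': "alpha_admissible (conjH H (inv b)) (inv (conjH H (inv b) a))"
    by (rule alpha_admissible_inverse[OF P conjH_hom dK inv1 inv2]) (use b in auto)
  have a: "a \<in> carrier H" using c by (simp add: outV_pair_def)
  show ?thesis unfolding alpha_def
    by (rule hnn_alpha_is_alpha[OF P P' inv1 inv2]) (use a b conjH_closed in auto)
qed

lemma phi_center: assumes z: "z \<in> center H" shows "\<phi> z \<in> center H"
  unfolding center_def centralizer_def
proof (intro CollectI conjI ballI)
  have zc: "z \<in> carrier H" by (rule center_carrier[OF z])
  show "\<phi> z \<in> carrier H" using phi_closed[OF zc] .
  fix h assume h: "h \<in> carrier H"
  obtain h' where h': "h' \<in> carrier H" "h = \<phi> h'" using phi_bij h by (metis bij_betw_iff_bijections)
  have "\<phi> z \<otimes> \<phi> h' = \<phi> (z \<otimes> h')" using zc h' by (simp add: phi_mult)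
  also have "\<dots> = \<phi> (h' \<otimes> z)" using center_commute[OF z h'(1)] by simp
  also have "\<dots> = \<phi> h' \<otimes> \<phi> z" using zc h' by (simp add: phi_mult)
  finally show "\<phi> z \<otimes> h = h \<otimes> \<phi> z" using h' by simp
qed

lemma phi_conj_centralizer: assumes c: "c \<in> centralizer H (\<phi> ` K)" and bN: "b \<in> normalizer H K"
  shows "\<phi> b \<otimes> c \<otimes> inv (\<phi> b) \<in> centralizer H (\<phi> ` K)"
  unfolding centralizer_def
proof (intro CollectI conjI ballI)
  have b: "b \<in> carrier H" by (rule normalizer_carrier[OF bN])
  have cc: "c \<in> carrier H" by (rule centralizer_carrier[OF c])
  define P where "P = \<phi> b"
  have Pc: "P \<in> carrier H" using phi_closed[OF b] by (simp add: P_def)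
  show "\<phi> b \<otimes> c \<otimes> inv (\<phi> b) \<in> carrier H" using Pc cc by (simp add: P_def[symmetric])
  fix s assume "s \<in> \<phi> ` K"
  then obtain k where k: "k \<in> K" "s = \<phi> k" by auto
  have kc: "k \<in> carrier H" using k K_subset by blast
  define k' where "k' = inv b \<otimes> k \<otimes> b"
  have k'K: "k' \<in> K" using normalizer_conj(2)[OF K_subset bN k(1)] by (simp add: k'_def)
  have k'c: "k' \<in> carrier H" using k'K K_subset by blast
  have pk': "\<phi> k' = inv P \<otimes> \<phi> k \<otimes> P" using b kc by (simp add: k'_def phi_mult phi_inv P_def)
  have pkc: "\<phi> k \<in> carrier H" using phi_closed[OF kc] .
  have pk'c: "\<phi> k' \<in> carrier H" using phi_closed[OF k'c] .
  have pk: "\<phi> k = P \<otimes> \<phi> k' \<otimes> inv P" using pk' Pc pkc by (simp add: m_assoc)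
  have comm: "c \<otimes> \<phi> k' = \<phi> k' \<otimes> c" using centralizerD[OF c] k'K by simp
  have comm2: "c \<otimes> (\<phi> k' \<otimes> y) = \<phi> k' \<otimes> (c \<otimes> y)" if "y \<in> carrier H" for y
    using comm that cc pk'c by (simp add: m_assoc[symmetric])
  have "P \<otimes> c \<otimes> inv P \<otimes> (P \<otimes> \<phi> k' \<otimes> inv P) = P \<otimes> (c \<otimes> (\<phi> k' \<otimes> inv P))"
    using Pc cc pk'c by (simp add: m_assoc)
  also have "\<dots> = P \<otimes> (\<phi> k' \<otimes> (c \<otimes> inv P))" using comm2 Pc by simp
  also have "\<dots> = (P \<otimes> \<phi> k' \<otimes> inv P) \<otimes> (P \<otimes> c \<otimes> inv P)" using Pc cc pk'c by (simp add: m_assoc)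
  finally show "\<phi> b \<otimes> c \<otimes> inv (\<phi> b) \<otimes> s = s \<otimes> (\<phi> b \<otimes> c \<otimes> inv (\<phi> b))"
    using k pk by (simp add: P_def)
qed

lemma outV_pair_mult: assumes c1: "outV_pair b1 a1" and c2: "outV_pair b2 a2"
  shows "outV_pair (b1 \<otimes> b2) (conjH H b2 a1 \<otimes> a2)"
proof -
  have b1N: "b1 \<in> normalizer H K" and a1: "a1 \<in> carrier H" and C1: "b1 \<otimes> a1 \<otimes> inv (\<phi> b1) \<in> centralizer H (\<phi> ` K)"
    using c1 by (auto simp: outV_pair_def)
  have b2N: "b2 \<in> normalizer H K" and a2: "a2 \<in> carrier H" and C2: "b2 \<otimes> a2 \<otimes> inv (\<phi> b2) \<in> centralizer H (\<phi> ` K)"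
    using c2 by (auto simp: outV_pair_def)
  have b1: "b1 \<in> carrier H" and b2: "b2 \<in> carrier H" using b1N b2N normalizer_carrier by auto
  have p1: "\<phi> b1 \<in> carrier H" and p2: "\<phi> b2 \<in> carrier H" using b1 b2 phi_closed by auto
  have N: "b1 \<otimes> b2 \<in> normalizer H K" using subgroup.m_closed[OF subgroup_normalizer b1N b2N] .
  have eq: "(b1 \<otimes> b2) \<otimes> (conjH H b2 a1 \<otimes> a2) \<otimes> inv (\<phi> (b1 \<otimes> b2))
      = (b1 \<otimes> a1 \<otimes> inv (\<phi> b1)) \<otimes> (\<phi> b1 \<otimes> (b2 \<otimes> a2 \<otimes> inv (\<phi> b2)) \<otimes> inv (\<phi> b1))"
    using b1 b2 a1 a2 p1 p2 by (simp add: conjH_def phi_mult m_assoc inv_mult_group)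
  have "(b1 \<otimes> a1 \<otimes> inv (\<phi> b1)) \<otimes> (\<phi> b1 \<otimes> (b2 \<otimes> a2 \<otimes> inv (\<phi> b2)) \<otimes> inv (\<phi> b1)) \<in> centralizer H (\<phi> ` K)"
    by (rule centralizer_mult[OF C1 phi_conj_centralizer[OF C2 b1N] phi_K_subset])
  hence "(b1 \<otimes> b2) \<otimes> (conjH H b2 a1 \<otimes> a2) \<otimes> inv (\<phi> (b1 \<otimes> b2)) \<in> centralizer H (\<phi> ` K)"
    using eq by simp
  moreover have "conjH H b2 a1 \<otimes> a2 \<in> carrier H" using a1 a2 b2 by (simp add: conjH_def)
  ultimately show ?thesis using N by (simp add: outV_pair_def)
qed

lemma compose_alpha: assumes c1: "outV_pair b1 a1" and c2: "outV_pair b2 a2"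
  shows "compose (carrier G) (alpha b2 a2) (alpha b1 a1) = alpha (b1 \<otimes> b2) (conjH H b2 a1 \<otimes> a2)"
proof (rule is_alpha_unique)
  show "is_alpha (conjH H (b1 \<otimes> b2)) (conjH H b2 a1 \<otimes> a2) (alpha (b1 \<otimes> b2) (conjH H b2 a1 \<otimes> a2))"
    by (rule is_alpha_alpha[OF outV_pair_mult[OF c1 c2]])
  note S1 = is_alpha_alpha[OF c1] and S2 = is_alpha_alpha[OF c2]
  have au1: "alpha b1 a1 \<in> auto G" and au2: "alpha b2 a2 \<in> auto G" using S1 S2 by (auto simp: is_alpha_def)
  have b1: "b1 \<in> carrier H" and b2: "b2 \<in> carrier H" using c1 c2 normalizer_carrier by (auto simp: outV_pair_def)
  have a1: "a1 \<in> carrier H" and a2: "a2 \<in> carrier H" using c1 c2 by (auto simp: outV_pair_def)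
  show "is_alpha (conjH H (b1 \<otimes> b2)) (conjH H b2 a1 \<otimes> a2) (compose (carrier G) (alpha b2 a2) (alpha b1 a1))"
    unfolding is_alpha_def
  proof (intro conjI ballI)
    show "compose (carrier G) (alpha b2 a2) (alpha b1 a1) \<in> auto G" by (rule HNN.compose_auto[OF au2 au1])
    fix h assume h: "h \<in> carrier H"
    have "compose (carrier G) (alpha b2 a2) (alpha b1 a1) (inc h) = inc (conjH H b2 (conjH H b1 h))"
      using S1 S2 h hnn_inc_carrier conjH_closed b1 by (simp add: is_alpha_def compose_def)
    also have "conjH H b2 (conjH H b1 h) = conjH H (b1 \<otimes> b2) h"
      using b1 b2 h by (simp add: conjH_def m_assoc inv_mult_group)
    finally show "compose (carrier G) (alpha b2 a2) (alpha b1 a1) (inc h) = inc (conjH H (b1 \<otimes> b2) h)" .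
  next
    have "compose (carrier G) (alpha b2 a2) (alpha b1 a1) t = alpha b2 a2 (inc a1 \<otimes>\<^bsub>G\<^esub> t)"
      using S1 hnn_t_carrier by (simp add: is_alpha_def compose_def)
    also have "\<dots> = inc (conjH H b2 a1) \<otimes>\<^bsub>G\<^esub> (inc a2 \<otimes>\<^bsub>G\<^esub> t)"
      using S2 a1 hnn_inc_carrier hnn_t_carrier HNN.auto_hom[OF au2] by (simp add: is_alpha_def hom_mult)
    also have "\<dots> = inc (conjH H b2 a1 \<otimes> a2) \<otimes>\<^bsub>G\<^esub> t"
      using a1 a2 b2 conjH_closed hnn_inc_carrier hnn_t_carrier by (simp add: HNN.m_assoc[symmetric] hnn_inc_mult)
    finally show "compose (carrier G) (alpha b2 a2) (alpha b1 a1) t = inc (conjH H b2 a1 \<otimes> a2) \<otimes>\<^bsub>G\<^esub> t" .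
  qed
qed

lemma hnn_alpha_conjH_one: "hnn_alpha H K \<phi> (conjH H \<one>) a = hnn_alpha H K \<phi> (\<lambda>h. h) a"
  unfolding hnn_alpha_def by (simp add: conjH_def)

lemma one_normalizer: "\<one> \<in> normalizer H K" using subgroup.one_closed[OF subgroup_normalizer] .

lemma outV_pair_one: "a \<in> centralizer H (\<phi> ` K) \<Longrightarrow> outV_pair \<one> a"
  using one_normalizer centralizer_carrier[of a] by (simp add: outV_pair_def phi_one)

section \<open>Normal forms\<close>

text \<open>
  A syllable (s, e) stands for s t (if e) or s t\<inverse> (if \<not> e); a state (L, h) stands for the word
  syllable_word (rev L) @ [h], so the head of L is the syllable next to h.  Pushing t through
  h = r p with p \<in> assoc e uses p t = t \<phi>\<inverse>(p) resp. p t\<inverse> = t\<inverse> \<phi>(p), which is transfer.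
  The trivial coset is represented by \<one>, so a pinch (t k t\<inverse> or t\<inverse> \<phi>(k) t) shows up as a
  syllable with representative \<one> next to one of opposite sign; reduced sequences have none.
\<close>

definition "assoc e = (if e then \<phi> ` K else K)"
definition "coset_rep e x = (if x \<in> assoc e then \<one> else (SOME r. r \<in> x <# assoc e))"
definition "phi_inverse p = inv_into (carrier H) \<phi> p"
definition "transfer e p = (if e then phi_inverse p else \<phi> p)"

definition "act_stable e st = (let L = fst st; h = snd st; r = coset_rep e h; q = transfer e (inv r \<otimes> h) in
   if L \<noteq> [] \<and> snd (hd L) = (\<not> e) \<and> r = \<one> then (tl L, fst (hd L) \<otimes> q) else ((r, e) # L, q))"

definition "act_letter l st = (case l of Inl x \<Rightarrow> if x \<in> carrier H then (fst st, snd st \<otimes> x) else st | Inr e \<Rightarrow> act_stable e st)"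

definition "act_word w st = fold act_letter w st"

definition "reduced L \<longleftrightarrow> (\<forall>(s,e)\<in>set L. s \<in> carrier H \<and> coset_rep e s = s) \<and> no_pinch \<one> L"
definition "reduced_state st \<longleftrightarrow> snd st \<in> carrier H \<and> reduced (fst st)"

definition "normal_word st = syllable_word (rev (fst st)) @ [Inl (snd st)]"

lemma subgroup_assoc: "subgroup (assoc e) H"
proof (cases e)
  case True
  have gh: "group_hom H H \<phi>" using phi_hom by (simp add: group_hom_def group_hom_axioms_def is_group)
  show ?thesis using True group_hom.subgroup_img_is_subgroup[OF gh K_sub] by (simp add: assoc_def)
qed (simp add: assoc_def K_sub)

lemma assoc_carrier: "p \<in> assoc e \<Longrightarrow> p \<in> carrier H"
  using subgroup_assoc subgroup.subset by blast

lemma assoc_proper: "\<exists>y\<in>carrier H. y \<notin> assoc e"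
proof (cases e)
  case False thus ?thesis using K_ne K_sub subgroup.subset by (fastforce simp: assoc_def)
next
  case True
  have inj: "inj_on \<phi> (carrier H)" and im: "\<phi> ` carrier H = carrier H" using phi_bij by (auto simp: bij_betw_def)
  have "K \<subseteq> carrier H" using K_sub subgroup.subset by blast
  hence "\<phi> ` K \<noteq> carrier H" using K_ne inj im inj_on_image_eq_iff[OF inj] by (metis order_refl)
  moreover have "\<phi> ` K \<subseteq> carrier H" using \<open>K \<subseteq> carrier H\<close> phi_closed by blast
  ultimately show ?thesis using True by (auto simp: assoc_def)
qed

lemma coset_rep_props:
  assumes x: "x \<in> carrier H"
  shows "coset_rep e x \<in> carrier H" "inv (coset_rep e x) \<otimes> x \<in> assoc e"
proof -
  interpret P: subgroup "assoc e" H by (rule subgroup_assoc)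
  have "coset_rep e x \<in> carrier H \<and> inv (coset_rep e x) \<otimes> x \<in> assoc e"
  proof (cases "x \<in> assoc e")
    case True thus ?thesis using x by (simp add: coset_rep_def)
  next
    case False
    have "x \<in> x <# assoc e" using x by (auto simp: l_coset_def intro!: bexI[of _ \<one>])
    hence "(SOME r. r \<in> x <# assoc e) \<in> x <# assoc e" by (rule someI)
    then obtain p where p: "p \<in> assoc e" "(SOME r. r \<in> x <# assoc e) = x \<otimes> p" by (auto simp: l_coset_def)
    have pc: "p \<in> carrier H" using p assoc_carrier by blast
    have "inv (x \<otimes> p) \<otimes> x = inv p" using x pc by (simp add: inv_mult_group m_assoc)
    thus ?thesis using False p x pc by (simp add: coset_rep_def)
  qed
  thus "coset_rep e x \<in> carrier H" "inv (coset_rep e x) \<otimes> x \<in> assoc e" by auto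
qed

lemma coset_rep_decomp: "x \<in> carrier H \<Longrightarrow> coset_rep e x \<otimes> (inv (coset_rep e x) \<otimes> x) = x"
  using coset_rep_props by (simp add: m_assoc[symmetric])

lemma coset_rep_one_iff: "x \<in> carrier H \<Longrightarrow> coset_rep e x = \<one> \<longleftrightarrow> x \<in> assoc e"
  using coset_rep_props[of x e] by (auto simp: coset_rep_def)

lemma coset_rep_mult: assumes x: "x \<in> carrier H" and p: "p \<in> assoc e" shows "coset_rep e (x \<otimes> p) = coset_rep e x"
proof -
  interpret P: subgroup "assoc e" H by (rule subgroup_assoc)
  have pc: "p \<in> carrier H" using p assoc_carrier by blast
  have iff: "x \<otimes> p \<in> assoc e \<longleftrightarrow> x \<in> assoc e"
  proof
    assume "x \<otimes> p \<in> assoc e"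
    hence "x \<otimes> p \<otimes> inv p \<in> assoc e" using p by (simp add: P.m_closed P.m_inv_closed)
    thus "x \<in> assoc e" using x pc by (simp add: m_assoc)
  next
    assume "x \<in> assoc e" thus "x \<otimes> p \<in> assoc e" using p by (simp add: P.m_closed)
  qed
  have "x \<otimes> p \<in> x <# assoc e" using p by (auto simp: l_coset_def)
  hence "x <# assoc e = (x \<otimes> p) <# assoc e" using l_repr_independence[OF _ x subgroup_assoc] by blast
  thus ?thesis using iff by (simp add: coset_rep_def)
qed

lemma coset_rep_idem: "x \<in> carrier H \<Longrightarrow> coset_rep e (coset_rep e x) = coset_rep e x"
proof -
  assume x: "x \<in> carrier H"
  have "coset_rep e (coset_rep e x \<otimes> (inv (coset_rep e x) \<otimes> x)) = coset_rep e (coset_rep e x)"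
    by (rule coset_rep_mult) (use coset_rep_props[OF x] in auto)
  thus ?thesis using coset_rep_decomp[OF x] by simp
qed

lemma transfer_props:
  assumes p: "p \<in> assoc e"
  shows "transfer e p \<in> assoc (\<not> e)" "transfer (\<not> e) (transfer e p) = p"
proof -
  have inj: "inj_on \<phi> (carrier H)" and im: "\<phi> ` carrier H = carrier H" using phi_bij by (auto simp: bij_betw_def)
  have K_subset: "K \<subseteq> carrier H" using K_sub subgroup.subset by blast
  show "transfer e p \<in> assoc (\<not> e)" "transfer (\<not> e) (transfer e p) = p"
  proof (atomize(full), cases e)
    case True
    then obtain k where k: "k \<in> K" "p = \<phi> k" using p by (auto simp: assoc_def)
    have "phi_inverse p = k" using k K_subset inj by (auto simp: phi_inverse_def inv_into_f_f subsetD)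
    thus "transfer e p \<in> assoc (\<not> e) \<and> transfer (\<not> e) (transfer e p) = p" using True k by (simp add: transfer_def assoc_def)
  next
    case False
    hence "p \<in> K" using p by (simp add: assoc_def)
    hence "phi_inverse (\<phi> p) = p" using K_subset inj by (auto simp: phi_inverse_def inv_into_f_f subsetD)
    thus "transfer e p \<in> assoc (\<not> e) \<and> transfer (\<not> e) (transfer e p) = p" using False \<open>p \<in> K\<close> by (simp add: transfer_def assoc_def)
  qed
qed

lemma transfer_carrier: "p \<in> assoc e \<Longrightarrow> transfer e p \<in> carrier H"
  using transfer_props assoc_carrier by blast

lemma act_stable_eq: "act_stable e (L, h) = (if L \<noteq> [] \<and> snd (hd L) = (\<not> e) \<and> coset_rep e h = \<one>
   then (tl L, fst (hd L) \<otimes> transfer e (inv (coset_rep e h) \<otimes> h)) else ((coset_rep e h, e) # L, transfer e (inv (coset_rep e h) \<otimes> h)))"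
  by (simp add: act_stable_def Let_def)

lemma act_stable_eq': "r = coset_rep e h \<Longrightarrow> q = transfer e (inv r \<otimes> h) \<Longrightarrow> act_stable e (L, h) = (if L \<noteq> [] \<and> snd (hd L) = (\<not> e) \<and> r = \<one>
   then (tl L, fst (hd L) \<otimes> q) else ((r, e) # L, q))"
  by (simp add: act_stable_eq)

lemma reduced_tl: "reduced L \<Longrightarrow> reduced (tl L)"
  by (cases L) (auto simp: reduced_def dest: no_pinch_tl)

lemma reduced_act_stable: assumes v: "reduced_state (L, h)" shows "reduced_state (act_stable e (L, h))"
proof -
  have h: "h \<in> carrier H" and vL: "reduced L" using v by (auto simp: reduced_state_def)
  define r where "r = coset_rep e h"
  define q where "q = transfer e (inv r \<otimes> h)"
  have r: "r \<in> carrier H" "inv r \<otimes> h \<in> assoc e" using coset_rep_props[OF h] by (auto simp: r_def)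
  have q: "q \<in> carrier H" using transfer_carrier[OF r(2)] by (simp add: q_def)
  show ?thesis
  proof (cases "L \<noteq> [] \<and> snd (hd L) = (\<not> e) \<and> r = \<one>")
    case True
    then obtain s' L' where L: "L = (s', \<not> e) # L'" by (cases L) auto
    have "s' \<in> carrier H" using vL L by (auto simp: reduced_def)
    have "act_stable e (L, h) = (tl L, fst (hd L) \<otimes> q)" using act_stable_eq'[OF r_def q_def, of L] True by simp
    thus ?thesis using L q reduced_tl[OF vL] \<open>s' \<in> carrier H\<close> by (simp add: reduced_state_def)
  next
    case False
    have no_pinch: "no_pinch \<one> ((r, e) # L)"
    proof (cases L)
      case (Cons a L')
      obtain s' e' where "a = (s', e')" by (cases a)
      thus ?thesis using False Cons vL by (auto simp: reduced_def)
    qed simp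
    have "reduced ((r, e) # L)" using no_pinch vL r coset_rep_idem[OF h] by (auto simp: reduced_def r_def)
    moreover have "act_stable e (L, h) = ((r, e) # L, q)" by (subst act_stable_eq'[OF r_def q_def]) (simp only: if_not_P[OF False])
    ultimately show ?thesis using q by (simp add: reduced_state_def)
  qed
qed

lemma act_stable_inverse: assumes v: "reduced_state (L, h)" shows "act_stable (\<not> e) (act_stable e (L, h)) = (L, h)"
proof -
  have h: "h \<in> carrier H" and vL: "reduced L" using v by (auto simp: reduced_state_def)
  define r where "r = coset_rep e h"
  define p where "p = inv r \<otimes> h"
  define q where "q = transfer e p"
  have r: "r \<in> carrier H" "p \<in> assoc e" "r \<otimes> p = h" using coset_rep_props[OF h] coset_rep_decomp[OF h] by (auto simp: r_def p_def)
  have q: "q \<in> assoc (\<not> e)" "transfer (\<not> e) q = p" using transfer_props[OF r(2)] by (auto simp: q_def)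
  have qc: "q \<in> carrier H" using q assoc_carrier by blast
  have pc: "p \<in> carrier H" using r assoc_carrier by blast
  show ?thesis
  proof (cases "L \<noteq> [] \<and> snd (hd L) = (\<not> e) \<and> r = \<one>")
    case True
    then obtain s' L' where L: "L = (s', \<not> e) # L'" by (cases L) auto
    have s': "s' \<in> carrier H" "coset_rep (\<not> e) s' = s'" using vL L by (auto simp: reduced_def)
    have st1: "act_stable e (L, h) = (L', s' \<otimes> q)"
      using True L act_stable_eq'[OF r_def q_def[unfolded p_def], of L] by simp
    have rr: "coset_rep (\<not> e) (s' \<otimes> q) = s'" using coset_rep_mult[OF s'(1) q(1)] s'(2) by simp
    have nop: "\<not> (L' \<noteq> [] \<and> snd (hd L') = (\<not> \<not> e) \<and> s' = \<one>)"
    proof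
      assume a: "L' \<noteq> [] \<and> snd (hd L') = (\<not> \<not> e) \<and> s' = \<one>"
      then obtain s'' L'' where "L' = (s'', e) # L''" by (cases L') auto
      thus False using vL L a by (auto simp: reduced_def)
    qed
    have "inv s' \<otimes> (s' \<otimes> q) = q" using s' qc by (simp add: m_assoc[symmetric])
    moreover have "act_stable (\<not> e) (L', s' \<otimes> q) = ((s', \<not> e) # L', transfer (\<not> e) (inv s' \<otimes> (s' \<otimes> q)))"
      by (subst act_stable_eq'[OF rr[symmetric] HOL.refl]) (simp only: if_not_P[OF nop])
    ultimately have "act_stable (\<not> e) (L', s' \<otimes> q) = ((s', \<not> e) # L', p)" using q by simp
    moreover have "p = h" using r True assoc_carrier by auto
    ultimately show ?thesis using st1 L by simp
  next
    case False
    have st1: "act_stable e (L, h) = ((r, e) # L, q)"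
      by (subst act_stable_eq'[OF r_def q_def[unfolded p_def]]) (simp only: if_not_P[OF False])
    have "coset_rep (\<not> e) q = \<one>" using coset_rep_one_iff[OF qc] q by simp
    hence "act_stable (\<not> e) ((r, e) # L, q) = (L, r \<otimes> p)" using q qc by (simp add: act_stable_eq)
    thus ?thesis using st1 r by simp
  qed
qed

lemma act_stable_relation: assumes v: "reduced_state (L, h)" and k: "k \<in> K"
  shows "act_stable False (fst (act_stable True (L, h)), snd (act_stable True (L, h)) \<otimes> k) = (L, h \<otimes> \<phi> k)"
proof -
  have h: "h \<in> carrier H" and vL: "reduced L" using v by (auto simp: reduced_state_def)
  have kc: "k \<in> carrier H" using K_carrier k by blast
  define r where "r = coset_rep True h"
  define p where "p = inv r \<otimes> h"
  define q where "q = transfer True p"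
  have r: "r \<in> carrier H" "p \<in> assoc True" "r \<otimes> p = h" using coset_rep_props[OF h] coset_rep_decomp[OF h] by (auto simp: r_def p_def)
  have q: "q \<in> K" "\<phi> q = p" using transfer_props[OF r(2)] by (auto simp: q_def assoc_def transfer_def)
  have qc: "q \<in> carrier H" using q K_carrier by blast
  have qk: "q \<otimes> k \<in> K" using q k K_sub by (simp add: subgroup.m_closed)
  have qkc: "q \<otimes> k \<in> carrier H" using qk K_carrier by blast
  have phq: "\<phi> (q \<otimes> k) = p \<otimes> \<phi> k" using phi_mult qc kc q by simp
  show ?thesis
  proof (cases "L \<noteq> [] \<and> snd (hd L) = (\<not> True) \<and> r = \<one>")
    case True
    then obtain s' L' where L: "L = (s', False) # L'" by (cases L) auto
    have s': "s' \<in> carrier H" "coset_rep False s' = s'" using vL L by (auto simp: reduced_def)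
    have st1: "act_stable True (L, h) = (L', s' \<otimes> q)"
      using True L act_stable_eq'[OF r_def q_def[unfolded p_def], of L] by simp
    have e1: "s' \<otimes> q \<otimes> k = s' \<otimes> (q \<otimes> k)" using s' qc kc by (simp add: m_assoc)
    have rr: "coset_rep False (s' \<otimes> (q \<otimes> k)) = s'" using coset_rep_mult[OF s'(1), of "q \<otimes> k" False] qk s'(2) by (simp add: assoc_def)
    have nop: "\<not> (L' \<noteq> [] \<and> snd (hd L') = (\<not> False) \<and> s' = \<one>)"
    proof
      assume a: "L' \<noteq> [] \<and> snd (hd L') = (\<not> False) \<and> s' = \<one>"
      then obtain s'' L'' where "L' = (s'', True) # L''" by (cases L') auto
      thus False using vL L a by (auto simp: reduced_def)
    qed
    have "inv s' \<otimes> (s' \<otimes> (q \<otimes> k)) = q \<otimes> k" using s' qkc by (simp add: m_assoc[symmetric])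
    moreover have "act_stable False (L', s' \<otimes> (q \<otimes> k)) = ((s', False) # L', transfer False (inv s' \<otimes> (s' \<otimes> (q \<otimes> k))))"
      by (subst act_stable_eq'[OF rr[symmetric] HOL.refl]) (simp only: if_not_P[OF nop])
    ultimately have "act_stable False (L', s' \<otimes> q \<otimes> k) = ((s', False) # L', \<phi> (q \<otimes> k))" using e1 by (simp add: transfer_def)
    moreover have "p = h" using r True assoc_carrier by auto
    ultimately show ?thesis using st1 L phq by simp
  next
    case False
    have st1: "act_stable True (L, h) = ((r, True) # L, q)"
      by (subst act_stable_eq'[OF r_def q_def[unfolded p_def]]) (simp only: if_not_P[OF False])
    have "coset_rep False (q \<otimes> k) = \<one>" using coset_rep_one_iff[OF qkc] qk by (simp add: assoc_def)
    hence "act_stable False ((r, True) # L, q \<otimes> k) = (L, r \<otimes> \<phi> (q \<otimes> k))" using qkc by (simp add: act_stable_eq transfer_def)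
    moreover have "r \<otimes> \<phi> (q \<otimes> k) = h \<otimes> \<phi> k" using phq r q phi_closed kc by (simp add: m_assoc[symmetric] assoc_carrier)
    ultimately show ?thesis using st1 by simp
  qed
qed

lemma reduced_act_letter: "reduced_state st \<Longrightarrow> reduced_state (act_letter l st)"
proof (cases st)
  case (Pair L h)
  assume v: "reduced_state st"
  show ?thesis
  proof (cases l)
    case (Inr e) thus ?thesis using reduced_act_stable[of L h e] v Pair by (simp add: act_letter_def)
  qed (use v Pair in \<open>auto simp: act_letter_def reduced_state_def\<close>)
qed

lemma reduced_act_word: "reduced_state st \<Longrightarrow> reduced_state (act_word w st)"
  by (induction w arbitrary: st) (auto simp: act_word_def reduced_act_letter)

lemma act_word_append: "act_word (w @ v) st = act_word v (act_word w st)"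
  by (simp add: act_word_def)
lemma act_word_Cons: "act_word (l # w) st = act_word w (act_letter l st)"
  by (simp add: act_word_def)
lemma act_word_Nil: "act_word [] st = st"
  by (simp add: act_word_def)

lemma hnn_eq_act_word: "E w v \<Longrightarrow> \<forall>st. reduced_state st \<longrightarrow> act_word w st = act_word v st"
proof (induction rule: hnn_eq.induct)
  case (cong w v u z)
  show ?case
  proof (intro allI impI)
    fix st assume "reduced_state st"
    hence "reduced_state (act_word u st)" by (rule reduced_act_word)
    hence "act_word w (act_word u st) = act_word v (act_word u st)" using cong.IH by blast
    thus "act_word (u @ w @ z) st = act_word (u @ v @ z) st" by (simp add: act_word_append)
  qed
next
  case (h_mult h h')
  show ?case by (auto simp: act_word_def act_letter_def reduced_state_def m_assoc h_mult)
next
  case h_one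
  show ?case by (auto simp: act_word_def act_letter_def reduced_state_def)
next
  case t_tinv
  show ?case using act_stable_inverse[of _ _ True] by (auto simp: act_word_def act_letter_def)
next
  case tinv_t
  show ?case using act_stable_inverse[of _ _ False] by (auto simp: act_word_def act_letter_def)
next
  case (rel k)
  have kc: "k \<in> carrier H" "\<phi> k \<in> carrier H" using K_carrier rel phi_closed by auto
  show ?case using act_stable_relation[OF _ rel] kc by (auto simp: act_word_def act_letter_def)
qed auto

lemma hnn_eq_swap: assumes p: "p \<in> assoc e" shows "E [Inl p, Inr e] [Inr e, Inl (transfer e p)]"
proof (cases e)
  case True
  then obtain k where k: "k \<in> K" "p = \<phi> k" using p by (auto simp: assoc_def)
  have inj: "inj_on \<phi> (carrier H)" using phi_bij by (auto simp: bij_betw_def)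
  have transfer: "transfer e p = k" using True k inj K_carrier by (simp add: transfer_def phi_inverse_def inv_into_f_f)
  have "E [Inl (\<phi> k), Inr True] ([Inr True, Inl k, Inr False] @ [Inr True])"
    using hnn_eq_append_right[OF hnn_eq.sym[OF hnn_eq.rel[OF k(1)]]] by simp
  moreover have "E ([Inr True, Inl k] @ [Inr False, Inr True] @ []) ([Inr True, Inl k] @ [] @ [])"
    by (rule hnn_eq.cong, rule hnn_eq.tinv_t)
  ultimately show ?thesis using True k transfer by (auto intro: hnn_eq.trans)
next
  case False
  hence k: "p \<in> K" using p by (simp add: assoc_def)
  have transfer: "transfer e p = \<phi> p" using False by (simp add: transfer_def)
  have "E [Inr False, Inl (\<phi> p)] ([Inr False] @ [Inr True, Inl p, Inr False])"
    using hnn_eq_append_left[OF hnn_eq.sym[OF hnn_eq.rel[OF k]], of "[Inr False]"] by simp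
  moreover have "E ([] @ [Inr False, Inr True] @ [Inl p, Inr False]) ([] @ [] @ [Inl p, Inr False])"
    by (rule hnn_eq.cong, rule hnn_eq.tinv_t)
  ultimately show ?thesis using False transfer by (auto intro: hnn_eq.trans hnn_eq.sym)
qed

lemma hnn_eq_cancel_stable: "E [Inr (\<not> e), Inr e] []"
  by (cases e) (auto intro: hnn_eq.t_tinv hnn_eq.tinv_t)

lemma hnn_eq_normal_word_letter: assumes v: "reduced_state (L, h)" and l: "[l] \<in> W"
  shows "E (normal_word (L, h) @ [l]) (normal_word (act_letter l (L, h)))"
proof (cases l)
  case (Inl x)
  have x: "x \<in> carrier H" using l Inl by simp
  have h: "h \<in> carrier H" using v by (simp add: reduced_state_def)
  show ?thesis using Inl x
    by (auto simp: normal_word_def act_letter_def intro!: hnn_eq_context[OF hnn_eq.h_mult[OF h x], of _ "syllable_word (rev L)" "[]"])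
next
  case (Inr e)
  have h: "h \<in> carrier H" and vL: "reduced L" using v by (auto simp: reduced_state_def)
  define S where "S = syllable_word (rev L)"
  define r where "r = coset_rep e h"
  define p where "p = inv r \<otimes> h"
  define q where "q = transfer e p"
  have r: "r \<in> carrier H" "p \<in> assoc e" "r \<otimes> p = h" using coset_rep_props[OF h] coset_rep_decomp[OF h] by (auto simp: r_def p_def)
  have pc: "p \<in> carrier H" using r assoc_carrier by blast
  have q: "q \<in> carrier H" using transfer_carrier[OF r(2)] by (simp add: q_def)
  have A: "E (normal_word (L, h) @ [l]) (S @ [Inl r] @ [Inl p, Inr e])"
    using Inr hnn_eq_context[OF hnn_eq.sym[OF hnn_eq.h_mult[OF r(1) pc]], of _ S "[Inr e]"] r(3) by (simp add: normal_word_def S_def)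
  have B: "E (S @ [Inl r] @ [Inl p, Inr e]) (S @ [Inl r] @ [Inr e, Inl q])"
    using hnn_eq_context[OF hnn_eq_swap[OF r(2)], of _ "S @ [Inl r]" "[]"] by (simp add: q_def)
  have AB: "E (normal_word (L, h) @ [l]) (S @ [Inl r, Inr e, Inl q])" using hnn_eq.trans[OF A B] by simp
  show ?thesis
  proof (cases "L \<noteq> [] \<and> snd (hd L) = (\<not> e) \<and> r = \<one>")
    case True
    then obtain s' L' where L: "L = (s', \<not> e) # L'" by (cases L) auto
    have s': "s' \<in> carrier H" using vL L by (auto simp: reduced_def)
    have st: "act_letter l (L, h) = (L', s' \<otimes> q)"
      using Inr True L by (simp add: act_letter_def, subst act_stable_eq'[OF r_def q_def[unfolded p_def]]) simp
    define S' where "S' = syllable_word (rev L')"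
    have S: "S = S' @ [Inl s', Inr (\<not> e)]" using L by (simp add: S_def S'_def)
    have C1: "E (S @ [Inl r, Inr e, Inl q]) ((S' @ [Inl s', Inr (\<not> e)]) @ [] @ [Inr e, Inl q])"
      using hnn_eq_context[OF hnn_eq.h_one, of _ "S' @ [Inl s', Inr (\<not> e)]" "[Inr e, Inl q]"] S True by simp
    have C2: "E ((S' @ [Inl s', Inr (\<not> e)]) @ [] @ [Inr e, Inl q]) ((S' @ [Inl s']) @ [] @ [Inl q])"
      using hnn_eq_context[OF hnn_eq_cancel_stable[of e], of _ "S' @ [Inl s']" "[Inl q]"] by simp
    have C3: "E ((S' @ [Inl s']) @ [] @ [Inl q]) (S' @ [Inl (s' \<otimes> q)] @ [])"
      using hnn_eq_context[OF hnn_eq.h_mult[OF s' q], of _ S' "[]"] by simp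
    show ?thesis using hnn_eq.trans[OF AB hnn_eq.trans[OF C1 hnn_eq.trans[OF C2 C3]]] st by (simp add: normal_word_def S'_def)
  next
    case False
    have st: "act_letter l (L, h) = ((r, e) # L, q)"
      using Inr by (simp add: act_letter_def, subst act_stable_eq'[OF r_def q_def[unfolded p_def]]) (simp only: if_not_P[OF False])
    show ?thesis using AB st by (simp add: normal_word_def S_def)
  qed
qed

lemma hnn_eq_normal_word_act: "w \<in> W \<Longrightarrow> reduced_state st \<Longrightarrow> E (normal_word st @ w) (normal_word (act_word w st))"
proof (induction w arbitrary: st)
  case Nil thus ?case by (simp add: act_word_Nil hnn_eq.refl)
next
  case (Cons l w)
  obtain L h where st: "st = (L, h)" by (cases st)
  have lW: "[l] \<in> W" and wW: "w \<in> W" using Cons.prems by (auto split: sum.splits)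
  have "E (normal_word st @ l # w) (normal_word (act_letter l st) @ w)"
    using hnn_eq_append_right[OF hnn_eq_normal_word_letter[OF Cons.prems(2)[unfolded st] lW], of w] st by simp
  moreover have "E (normal_word (act_letter l st) @ w) (normal_word (act_word w (act_letter l st)))"
    by (rule Cons.IH[OF wW reduced_act_letter[OF Cons.prems(2)]])
  ultimately show ?case by (simp add: act_word_Cons hnn_eq.trans)
qed

lemma reduced_state_Nil: "h \<in> carrier H \<Longrightarrow> reduced_state ([], h)"
  by (simp add: reduced_state_def reduced_def)

lemma hnn_eq_normal_word: assumes w: "w \<in> W" shows "E w (normal_word (act_word w ([], \<one>)))"
proof -
  have "E ([] @ w) ([Inl \<one>] @ w)" by (rule hnn_eq_append_right, rule hnn_eq.sym, rule hnn_eq.h_one)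
  moreover have "E ([Inl \<one>] @ w) (normal_word (act_word w ([], \<one>)))"
    using hnn_eq_normal_word_act[OF w reduced_state_Nil[OF one_closed]] by (simp add: normal_word_def)
  ultimately show ?thesis by (auto intro: hnn_eq.trans)
qed

lemma hnn_inc_inj: assumes h: "h \<in> carrier H" "h' \<in> carrier H" and eq: "inc h = inc h'" shows "h = h'"
proof -
  have "E [Inl h] [Inl h']" using eq h hnn_class_eq_iff[of "[Inl h]" "[Inl h']"] by (simp add: hnn_inc_def)
  hence "act_word [Inl h] ([], \<one>) = act_word [Inl h'] ([], \<one>)" using hnn_eq_act_word reduced_state_Nil[OF one_closed] by blast
  thus ?thesis using h by (simp add: act_word_def act_letter_def)
qed

lemma phi_inverse_one: "phi_inverse \<one> = \<one>"
proof -
  have inj: "inj_on \<phi> (carrier H)" using phi_bij by (auto simp: bij_betw_def)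
  have "\<phi> \<one> = \<one>" using phi_hom by (simp add: hom_one is_monoid)
  thus ?thesis using inj by (metis inv_into_f_f one_closed phi_inverse_def)
qed

lemma britton_conj_t: assumes h: "h \<in> carrier H" and h': "h' \<in> carrier H"
  and eq: "t \<otimes>\<^bsub>G\<^esub> inc h \<otimes>\<^bsub>G\<^esub> inv\<^bsub>G\<^esub> t = inc h'" shows "h \<in> K"
proof (rule ccontr)
  assume nk: "h \<notin> K"
  have "t \<otimes>\<^bsub>G\<^esub> inc h \<otimes>\<^bsub>G\<^esub> inv\<^bsub>G\<^esub> t = cls [Inr True, Inl h, Inr False]"
    unfolding inv_hnn_t using h by (simp add: hnn_t_def hnn_inc_def mult_HNN)
  hence "E [Inr True, Inl h, Inr False] [Inl h']" using eq h h' hnn_class_eq_iff[of "[Inr True, Inl h, Inr False]" "[Inl h']"]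
    by (simp add: hnn_inc_def)
  hence eq2: "act_word [Inr True, Inl h, Inr False] ([], \<one>) = act_word [Inl h'] ([], \<one>)" using hnn_eq_act_word reduced_state_Nil[OF one_closed] by blast
  have one_PP: "\<one> \<in> assoc True" using subgroup_assoc subgroup.one_closed by blast
  have r1: "coset_rep True \<one> = \<one>" using coset_rep_one_iff[OF one_closed] one_PP by simp
  have s1: "act_stable True ([], \<one>) = ([(\<one>, True)], \<one>)"
    by (simp add: act_stable_eq r1 transfer_def phi_inverse_one)
  have rh: "coset_rep False h \<noteq> \<one>" using coset_rep_one_iff[OF h, of False] nk by (simp add: assoc_def)
  have "fst (act_stable False ([(\<one>, True)], \<one> \<otimes> h)) \<noteq> []" using rh h by (simp add: act_stable_eq)
  moreover have "fst (act_word [Inr True, Inl h, Inr False] ([], \<one>)) = fst (act_stable False ([(\<one>, True)], \<one> \<otimes> h))"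
    using s1 h by (simp add: act_word_def act_letter_def)
  moreover have "fst (act_word [Inl h'] ([], \<one>)) = []" using h' by (simp add: act_word_def act_letter_def)
  ultimately show False using eq2 by simp
qed

lemma act_stable_no_cancel:
  assumes s: "s \<in> carrier H" and h: "h \<in> carrier H"
    and hS: "S \<noteq> [] \<Longrightarrow> h \<in> assoc (\<not> snd (hd S))"
    and sS: "S \<noteq> [] \<Longrightarrow> snd (hd S) = (\<not> e) \<Longrightarrow> s \<notin> assoc e"
  shows "\<not> (S \<noteq> [] \<and> snd (hd S) = (\<not> e) \<and> coset_rep e (h \<otimes> s) = \<one>)"
proof
  assume A: "S \<noteq> [] \<and> snd (hd S) = (\<not> e) \<and> coset_rep e (h \<otimes> s) = \<one>"
  interpret P: subgroup "assoc e" H by (rule subgroup_assoc)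
  have "h \<in> assoc e" using hS A by simp
  moreover have "h \<otimes> s \<in> assoc e" using A coset_rep_one_iff s h by simp
  ultimately have "inv h \<otimes> (h \<otimes> s) \<in> assoc e" by (metis P.m_closed P.m_inv_closed)
  thus False using sS A s h by simp
qed

lemma act_word_syllable_word:
  assumes vL: "reduced L" and h: "h \<in> carrier H"
  shows "\<exists>N h'. act_word (syllable_word (rev L)) ([], h) = (N, h') \<and> h' \<in> carrier H
     \<and> (N \<noteq> [] \<longrightarrow> h' \<in> assoc (\<not> snd (hd N)))
     \<and> (L \<noteq> [] \<longrightarrow> N \<noteq> [] \<and> snd (hd N) = snd (hd L) \<and> last N = (coset_rep (snd (last L)) (h \<otimes> fst (last L)), snd (last L)))
     \<and> (L = [] \<longrightarrow> N = [] \<and> h' = h)"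
  using vL
proof (induction L)
  case Nil thus ?case using h by (auto simp: act_word_Nil)
next
  case (Cons a L')
  obtain s e where a: "a = (s, e)" by (cases a)
  have s: "s \<in> carrier H" "coset_rep e s = s" using Cons.prems a by (auto simp: reduced_def)
  obtain N' h1 where IH: "act_word (syllable_word (rev L')) ([], h) = (N', h1)" "h1 \<in> carrier H"
     "N' \<noteq> [] \<longrightarrow> h1 \<in> assoc (\<not> snd (hd N'))"
     "L' \<noteq> [] \<longrightarrow> N' \<noteq> [] \<and> snd (hd N') = snd (hd L') \<and> last N' = (coset_rep (snd (last L')) (h \<otimes> fst (last L')), snd (last L'))"
     "L' = [] \<longrightarrow> N' = [] \<and> h1 = h"
    using Cons.IH Cons.prems reduced_tl by fastforce
  define x where "x = h1 \<otimes> s"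
  have xc: "x \<in> carrier H" using IH(2) s by (simp add: x_def)
  have step: "act_word (syllable_word (rev (a # L'))) ([], h) = act_stable e (N', x)"
    using IH(1) s a by (simp add: act_word_append act_word_def act_letter_def x_def)
  have sP: "s \<notin> assoc e" if "N' \<noteq> []" "snd (hd N') = (\<not> e)"
  proof -
    have "L' \<noteq> []" using IH(5) that(1) by blast
    then obtain s1 e1 L'' where L': "L' = (s1, e1) # L''" by (cases L') auto
    hence "e1 = (\<not> e)" using IH(4) that by simp
    hence "s \<noteq> \<one>" using Cons.prems a L' by (auto simp: reduced_def)
    thus ?thesis using s coset_rep_one_iff[OF s(1), of e] by simp
  qed
  have nop: "\<not> (N' \<noteq> [] \<and> snd (hd N') = (\<not> e) \<and> coset_rep e x = \<one>)"
    unfolding x_def by (rule act_stable_no_cancel[OF s(1) IH(2)]) (use IH(3) sP in auto)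
  define r where "r = coset_rep e x"
  define q where "q = transfer e (inv r \<otimes> x)"
  have r: "r \<in> carrier H" "inv r \<otimes> x \<in> assoc e" using coset_rep_props[OF xc] by (auto simp: r_def)
  have q: "q \<in> assoc (\<not> e)" using transfer_props(1)[OF r(2)] by (simp add: q_def)
  have st: "act_stable e (N', x) = ((r, e) # N', q)"
    by (subst act_stable_eq'[OF r_def q_def]) (use nop in \<open>simp only: r_def[symmetric] if_not_P if_False\<close>)
  show ?case
  proof (intro exI conjI impI)
    show "act_word (syllable_word (rev (a # L'))) ([], h) = ((r, e) # N', q)" using step st by simp
    show "q \<in> carrier H" using q assoc_carrier by blast
    show "q \<in> assoc (\<not> snd (hd ((r, e) # N')))" using q by simp
    show "snd (hd ((r, e) # N')) = snd (hd (a # L'))" using a by simp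
    show "last ((r, e) # N') = (coset_rep (snd (last (a # L'))) (h \<otimes> fst (last (a # L'))), snd (last (a # L')))"
    proof (cases "L' = []")
      case True thus ?thesis using IH(5) a by (simp add: r_def x_def)
    next
      case False thus ?thesis using IH(4) by simp
    qed
  qed (auto)
qed

lemma last_act_word_normal_word:
  assumes vL: "reduced L" and h: "h \<in> carrier H" and L: "L \<noteq> []"
  shows "last (fst (act_word (normal_word (L, h0)) ([], h)))
           = (coset_rep (snd (last L)) (h \<otimes> fst (last L)), snd (last L))"
proof -
  obtain N h' where "act_word (syllable_word (rev L)) ([], h) = (N, h')"
      "last N = (coset_rep (snd (last L)) (h \<otimes> fst (last L)), snd (last L))"
    using act_word_syllable_word[OF vL h] L by auto
  thus ?thesis by (simp add: normal_word_def act_word_append act_word_def act_letter_def)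
qed

text \<open>If c \<notin> H, let (s, e) be the first syllable of its normal form.  Multiplying
  by h = s y s\<inverse> on the left, with y \<notin> assoc e (here K \<noteq> H is used), turns its representative
  into that of s y, so h c and c h have different normal forms.\<close>
lemma centralizer_hnn_inc:
  assumes c: "c \<in> carrier G" and comm: "\<And>h. h \<in> carrier H \<Longrightarrow> c \<otimes>\<^bsub>G\<^esub> inc h = inc h \<otimes>\<^bsub>G\<^esub> c"
  shows "c \<in> inc ` carrier H"
proof -
  obtain w where w: "w \<in> W" "c = cls w" using c by (auto simp: carrier_HNN)
  obtain L h0 where st: "act_word w ([], \<one>) = (L, h0)" by (cases "act_word w ([], \<one>)")
  have v: "reduced_state (L, h0)" using reduced_act_word[OF reduced_state_Nil[OF one_closed], of w] st by simp
  have h0: "h0 \<in> carrier H" and vL: "reduced L" using v by (auto simp: reduced_state_def)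
  have Ew: "E w (normal_word (L, h0))" using hnn_eq_normal_word[OF w(1)] st by simp
  show ?thesis
  proof (cases "L = []")
    case True
    have "c = inc h0" using w Ew True by (simp add: normal_word_def hnn_inc_def hnn_class_eqI)
    thus ?thesis using h0 by blast
  next
    case False
    obtain s1 e1 where last: "last L = (s1, e1)" by (cases "last L")
    have "(s1, e1) \<in> set L" using False last last_in_set by metis
    hence s1: "s1 \<in> carrier H" using vL by (auto simp: reduced_def)
    obtain y where y: "y \<in> carrier H" "y \<notin> assoc e1" using assoc_proper by blast
    define h where "h = s1 \<otimes> y \<otimes> inv s1"
    have hc: "h \<in> carrier H" using s1 y by (simp add: h_def)
    have "cls (w @ [Inl h]) = c \<otimes>\<^bsub>G\<^esub> inc h" using w hc by (simp add: hnn_inc_def mult_HNN)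
    also have "\<dots> = inc h \<otimes>\<^bsub>G\<^esub> c" by (rule comm[OF hc])
    also have "\<dots> = cls (Inl h # w)" using w hc by (simp add: hnn_inc_def mult_HNN)
    finally have "E (w @ [Inl h]) (Inl h # w)" using w hc hnn_class_eq_iff[of "w @ [Inl h]" "Inl h # w"] by simp
    hence "act_word (w @ [Inl h]) ([], \<one>) = act_word (Inl h # w) ([], \<one>)"
      using hnn_eq_act_word reduced_state_Nil[OF one_closed] by blast
    also have "\<dots> = act_word w ([], h)" using hc by (simp add: act_word_Cons act_letter_def)
    also have "\<dots> = act_word (normal_word (L, h0)) ([], h)"
      using hnn_eq_act_word[OF Ew] reduced_state_Nil[OF hc] by blast
    finally have "(L, h0 \<otimes> h) = act_word (normal_word (L, h0)) ([], h)"
      using st hc by (simp add: act_word_append act_word_def act_letter_def)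
    hence "L = fst (act_word (normal_word (L, h0)) ([], h))" by (metis fst_conv)
    hence "last L = (coset_rep e1 (h \<otimes> s1), e1)"
      using last_act_word_normal_word[OF vL hc False, of h0] last by (metis fst_conv snd_conv)
    hence "coset_rep e1 (h \<otimes> s1) = s1" using last by simp
    moreover have "h \<otimes> s1 = s1 \<otimes> y" using s1 y by (simp add: h_def m_assoc)
    ultimately have "inv s1 \<otimes> (s1 \<otimes> y) \<in> assoc e1" using coset_rep_props(2)[of "s1 \<otimes> y" e1] s1 y by simp
    hence "y \<in> assoc e1" using s1 y by simp
    thus ?thesis using y by simp
  qed
qed

section \<open>The map \<chi>\<close>

abbreviation "ZK \<equiv> center H <#> K"

lemma ZK_mem: "x \<in> ZK \<longleftrightarrow> (\<exists>z\<in>center H. \<exists>k\<in>K. x = z \<otimes> k)"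
  by (auto simp: set_mult_def)

lemma ZK_memI: "z \<in> center H \<Longrightarrow> k \<in> K \<Longrightarrow> z \<otimes> k \<in> ZK"
  unfolding set_mult_def by blast

lemma conj_between_alphas_in_H:
  assumes c: "outV_pair b a" and c': "outV_pair b' a'" and dc: "d \<in> carrier G"
    and act: "\<And>h. h \<in> carrier H \<Longrightarrow> alpha b' a' (inc h) = inv\<^bsub>G\<^esub> d \<otimes>\<^bsub>G\<^esub> alpha b a (inc h) \<otimes>\<^bsub>G\<^esub> d"
  shows "\<exists>z\<in>center H. d = inc (inv b \<otimes> z \<otimes> b')"
proof -
  note S = is_alpha_alpha[OF c] and S' = is_alpha_alpha[OF c']
  have b: "b \<in> carrier H" and b': "b' \<in> carrier H"
    using c c' normalizer_carrier by (auto simp: outV_pair_def)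
  define u where "u = inc b \<otimes>\<^bsub>G\<^esub> d \<otimes>\<^bsub>G\<^esub> inv\<^bsub>G\<^esub> (inc b')"
  have uc: "u \<in> carrier G" using b b' dc hnn_inc_carrier by (simp add: u_def)
  have ucomm: "u \<otimes>\<^bsub>G\<^esub> inc h = inc h \<otimes>\<^bsub>G\<^esub> u" if h: "h \<in> carrier H" for h
  proof -
    have "inc (conjH H b' h) = inv\<^bsub>G\<^esub> d \<otimes>\<^bsub>G\<^esub> inc (conjH H b h) \<otimes>\<^bsub>G\<^esub> d"
      using act[OF h] S S' h by (simp add: is_alpha_def)
    moreover have "inc (conjH H b' h) = inv\<^bsub>G\<^esub> (inc b') \<otimes>\<^bsub>G\<^esub> inc h \<otimes>\<^bsub>G\<^esub> inc b'"
      using h b' by (simp add: conjH_def hnn_inc_mult[symmetric] hnn_inc_inv)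
    moreover have "inc (conjH H b h) = inv\<^bsub>G\<^esub> (inc b) \<otimes>\<^bsub>G\<^esub> inc h \<otimes>\<^bsub>G\<^esub> inc b"
      using h b by (simp add: conjH_def hnn_inc_mult[symmetric] hnn_inc_inv)
    ultimately show ?thesis unfolding u_def
      by (intro HNN.commute_of_conj_eq) (use h b b' dc hnn_inc_carrier in auto)
  qed
  obtain z where z: "z \<in> carrier H" "u = inc z" using centralizer_hnn_inc[OF uc ucomm] by auto
  have "z \<in> center H"
    unfolding center_def centralizer_def
  proof (intro CollectI conjI ballI)
    fix h assume h: "h \<in> carrier H"
    have "inc (z \<otimes> h) = inc (h \<otimes> z)" using ucomm[OF h] z h by (simp add: hnn_inc_mult)
    thus "z \<otimes> h = h \<otimes> z" using hnn_inc_inj z h by simp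
  qed (rule z(1))
  moreover have "d = inv\<^bsub>G\<^esub> (inc b) \<otimes>\<^bsub>G\<^esub> u \<otimes>\<^bsub>G\<^esub> inc b'"
    using dc b b' hnn_inc_carrier by (simp add: u_def HNN.m_assoc)
  hence "d = inc (inv b \<otimes> z \<otimes> b')" using z b b' by (simp add: hnn_inc_inv hnn_inc_mult)
  ultimately show ?thesis by blast
qed

lemma conj_between_alphas_in_K:
  assumes c: "outV_pair b a" and c': "outV_pair b' a'" and d: "d \<in> carrier H"
    and act: "alpha b' a' t = inv\<^bsub>G\<^esub> (inc d) \<otimes>\<^bsub>G\<^esub> alpha b a t \<otimes>\<^bsub>G\<^esub> inc d"
  shows "d \<in> K"
proof (rule britton_conj_t[OF d])
  have a: "a \<in> carrier H" and a': "a' \<in> carrier H" using c c' by (auto simp: outV_pair_def)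
  have "inc a' \<otimes>\<^bsub>G\<^esub> t = inv\<^bsub>G\<^esub> (inc d) \<otimes>\<^bsub>G\<^esub> (inc a \<otimes>\<^bsub>G\<^esub> t) \<otimes>\<^bsub>G\<^esub> inc d"
    using act is_alpha_alpha[OF c] is_alpha_alpha[OF c'] by (simp add: is_alpha_def)
  hence "t \<otimes>\<^bsub>G\<^esub> inc d \<otimes>\<^bsub>G\<^esub> inv\<^bsub>G\<^esub> t = inv\<^bsub>G\<^esub> (inc a) \<otimes>\<^bsub>G\<^esub> inc d \<otimes>\<^bsub>G\<^esub> inc a'"
    by (intro HNN.conj_eq_of_twisted_eq) (use a a' d hnn_inc_carrier hnn_t_carrier in auto)
  thus "t \<otimes>\<^bsub>G\<^esub> inc d \<otimes>\<^bsub>G\<^esub> inv\<^bsub>G\<^esub> t = inc (inv a \<otimes> d \<otimes> a')"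
    using a a' d by (simp add: hnn_inc_inv hnn_inc_mult)
  show "inv a \<otimes> d \<otimes> a' \<in> carrier H" using a a' d by simp
qed

lemma coset_eq_if_outer_class_eq:
  assumes c: "outV_pair b a" and c': "outV_pair b' a'"
    and eq: "outer_class G (alpha b a) = outer_class G (alpha b' a')"
  shows "ZK #> b = ZK #> b'"
proof -
  have au: "alpha b a \<in> auto G" and au': "alpha b' a' \<in> auto G"
    using is_alpha_alpha[OF c] is_alpha_alpha[OF c'] by (auto simp: is_alpha_def)
  have bN: "b \<in> normalizer H K" using c by (simp add: outV_pair_def)
  have b: "b \<in> carrier H" and b': "b' \<in> carrier H"
    using c c' normalizer_carrier by (auto simp: outV_pair_def)
  have "alpha b' a' \<in> outer_class G (alpha b a)" using HNN.outer_class_self[OF au'] eq by simp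
  then obtain g where g: "g \<in> carrier G" "alpha b' a' = compose (carrier G) (alpha b a) (conj_aut G g)"
    using HNN.outer_class_conj_aut[OF au] by auto
  define d where "d = alpha b a g"
  have dc: "d \<in> carrier G" using HNN.auto_carrier[OF au g(1)] by (simp add: d_def)
  have act: "alpha b' a' x = inv\<^bsub>G\<^esub> d \<otimes>\<^bsub>G\<^esub> alpha b a x \<otimes>\<^bsub>G\<^esub> d" if "x \<in> carrier G" for x
    using HNN.compose_conj_aut[OF au g(1) that] g(2) by (simp add: d_def)
  obtain z where z: "z \<in> center H" "d = inc (inv b \<otimes> z \<otimes> b')"
    using conj_between_alphas_in_H[OF c c' dc act[OF hnn_inc_carrier]] by blast
  have zc: "z \<in> carrier H" using center_carrier[OF z(1)] .
  have "inv b \<otimes> z \<otimes> b' \<in> K"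
    using conj_between_alphas_in_K[OF c c' _ act[OF hnn_t_carrier, unfolded z(2)]] b b' zc by simp
  hence "inv z \<otimes> (b \<otimes> (inv b \<otimes> z \<otimes> b') \<otimes> inv b) \<in> ZK"
    by (rule ZK_memI[OF center_inv[OF z(1)] normalizer_conj(1)[OF K_subset bN]])
  moreover have "b' = inv z \<otimes> (b \<otimes> (inv b \<otimes> z \<otimes> b') \<otimes> inv b) \<otimes> b" using b b' zc by (simp add: m_assoc)
  ultimately have "b' \<in> ZK #> b" unfolding r_coset_def by blast
  thus ?thesis using repr_independence[OF _ b subgroup_center_set_mult[OF K_sub]] by blast
qed

lemma untwist_centralizer:
  assumes c: "outV_pair (z \<otimes> k) a" and z: "z \<in> center H" and k: "k \<in> K"
  shows "k \<otimes> a \<otimes> inv (\<phi> k) \<in> centralizer H (\<phi> ` K)"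
proof -
  have zc: "z \<in> carrier H" and kc: "k \<in> carrier H" using center_carrier[OF z] K_carrier[OF k] by auto
  have a: "a \<in> carrier H" and C: "z \<otimes> k \<otimes> a \<otimes> inv (\<phi> (z \<otimes> k)) \<in> centralizer H (\<phi> ` K)"
    using c by (auto simp: outV_pair_def)
  have "k \<otimes> a \<otimes> inv (\<phi> k) = inv z \<otimes> (z \<otimes> k \<otimes> a \<otimes> inv (\<phi> (z \<otimes> k))) \<otimes> \<phi> z"
    using zc kc a phi_closed by (simp add: phi_mult m_assoc inv_mult_group)
  also have "\<dots> \<in> centralizer H (\<phi> ` K)"
    by (rule centralizer_mult[OF centralizer_mult[OF center_centralizer[OF center_inv[OF z] phi_K_subset] C phi_K_subset]
          center_centralizer[OF phi_center[OF z] phi_K_subset] phi_K_subset])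
  finally show ?thesis .
qed

lemma compose_alpha_conj_aut_K:
  assumes c: "outV_pair (z \<otimes> k) a" and z: "z \<in> center H" and k: "k \<in> K"
    and a'': "a'' = k \<otimes> a \<otimes> inv (\<phi> k)"
  shows "compose (carrier G) (alpha \<one> a'') (conj_aut G (inc k)) = alpha (z \<otimes> k) a"
proof (rule is_alpha_unique[OF _ is_alpha_alpha[OF c]])
  have zc: "z \<in> carrier H" and kc: "k \<in> carrier H" using center_carrier[OF z] K_carrier[OF k] by auto
  have a: "a \<in> carrier H" using c by (simp add: outV_pair_def)
  have pk: "\<phi> k \<in> carrier H" and a''c: "a'' \<in> carrier H" using phi_closed[OF kc] kc a a'' by auto
  note S'' = is_alpha_alpha[OF outV_pair_one[OF untwist_centralizer[OF c z k, folded a'']]]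
  have au'': "alpha \<one> a'' \<in> auto G" using S'' by (simp add: is_alpha_def)
  have ikc: "inc k \<in> carrier G" using hnn_inc_carrier[OF kc] .
  have ah: "alpha \<one> a'' (inc h) = inc h" if "h \<in> carrier H" for h
    using S'' that by (simp add: is_alpha_def conjH_def)
  show "is_alpha (conjH H (z \<otimes> k)) a (compose (carrier G) (alpha \<one> a'') (conj_aut G (inc k)))"
    unfolding is_alpha_def
  proof (intro conjI ballI)
    show "compose (carrier G) (alpha \<one> a'') (conj_aut G (inc k)) \<in> auto G"
      by (rule HNN.compose_auto[OF au'' HNN.conj_aut_auto[OF ikc]])
    fix h assume h: "h \<in> carrier H"
    have "h \<otimes> z = z \<otimes> h" using center_commute[OF z h] by simp
    hence "inv z \<otimes> (h \<otimes> (z \<otimes> k)) = h \<otimes> k" using zc kc h by (simp add: m_assoc[symmetric])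
    hence "conjH H (z \<otimes> k) h = inv k \<otimes> h \<otimes> k"
      using zc kc h by (simp add: conjH_def inv_mult_group m_assoc)
    thus "compose (carrier G) (alpha \<one> a'') (conj_aut G (inc k)) (inc h) = inc (conjH H (z \<otimes> k) h)"
      using HNN.compose_conj_aut[OF au'' ikc hnn_inc_carrier[OF h]] ah[OF kc] ah[OF h] h kc
      by (simp add: hnn_inc_inv hnn_inc_mult)
  next
    have "t \<otimes>\<^bsub>G\<^esub> inc k \<otimes>\<^bsub>G\<^esub> inv\<^bsub>G\<^esub> t \<otimes>\<^bsub>G\<^esub> t = inc (\<phi> k) \<otimes>\<^bsub>G\<^esub> t" using hnn_t_conj[OF k] by simp
    hence tk: "t \<otimes>\<^bsub>G\<^esub> inc k = inc (\<phi> k) \<otimes>\<^bsub>G\<^esub> t" using hnn_t_carrier ikc by (simp add: HNN.m_assoc)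
    have "compose (carrier G) (alpha \<one> a'') (conj_aut G (inc k)) t = inv\<^bsub>G\<^esub> (inc k) \<otimes>\<^bsub>G\<^esub> (inc a'' \<otimes>\<^bsub>G\<^esub> t) \<otimes>\<^bsub>G\<^esub> inc k"
      using HNN.compose_conj_aut[OF au'' ikc hnn_t_carrier] ah[OF kc] S'' by (simp add: is_alpha_def)
    also have "\<dots> = inv\<^bsub>G\<^esub> (inc k) \<otimes>\<^bsub>G\<^esub> inc a'' \<otimes>\<^bsub>G\<^esub> (t \<otimes>\<^bsub>G\<^esub> inc k)"
      using ikc hnn_inc_carrier[OF a''c] hnn_t_carrier by (simp add: HNN.m_assoc)
    also have "\<dots> = inc (inv k \<otimes> a'' \<otimes> \<phi> k) \<otimes>\<^bsub>G\<^esub> t"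
      using tk kc a''c pk hnn_inc_carrier hnn_t_carrier by (simp add: HNN.m_assoc[symmetric] hnn_inc_inv hnn_inc_mult)
    also have "inv k \<otimes> a'' \<otimes> \<phi> k = a" using kc a pk by (simp add: a'' m_assoc)
    finally show "compose (carrier G) (alpha \<one> a'') (conj_aut G (inc k)) t = inc a \<otimes>\<^bsub>G\<^esub> t" .
  qed
qed

lemma outer_class_alpha_trivial_coset: assumes c: "outV_pair b a" and bZ: "b \<in> ZK"
  shows "\<exists>a''. a'' \<in> centralizer H (\<phi> ` K) \<and> outer_class G (alpha b a) = outer_class G (hnn_alpha H K \<phi> (\<lambda>h. h) a'')"
proof -
  obtain z k where zk: "z \<in> center H" "k \<in> K" "b = z \<otimes> k" using bZ unfolding ZK_mem by blast
  define a'' where "a'' = k \<otimes> a \<otimes> inv (\<phi> k)"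
  have c': "outV_pair (z \<otimes> k) a" using c zk(3) by simp
  have a''C: "a'' \<in> centralizer H (\<phi> ` K)" unfolding a''_def by (rule untwist_centralizer[OF c' zk(1,2)])
  have au'': "alpha \<one> a'' \<in> auto G" using is_alpha_alpha[OF outV_pair_one[OF a''C]] by (simp add: is_alpha_def)
  have "outer_class G (alpha b a) = outer_class G (alpha \<one> a'')"
    using HNN.outer_class_compose_conj_aut[OF au'' hnn_inc_carrier[OF K_carrier[OF zk(2)]]]
      compose_alpha_conj_aut_K[OF c' zk(1,2) a''_def] zk(3) by simp
  thus ?thesis using a''C by (auto simp: alpha_def hnn_alpha_conjH_one)
qed

lemma ZK_coset_mult: assumes b1: "b1 \<in> normalizer H K" and b2: "b2 \<in> normalizer H K"
  shows "(ZK #> b1) <#> (ZK #> b2) = ZK #> (b1 \<otimes> b2)"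
proof -
  have b1c: "b1 \<in> carrier H" and b2c: "b2 \<in> carrier H" using b1 b2 normalizer_carrier by auto
  have ZKc: "ZK \<subseteq> carrier H" using subgroup_center_set_mult[OF K_sub] subgroup.subset by blast
  have conjZK: "b1 \<otimes> x \<otimes> inv b1 \<in> ZK" if x: "x \<in> ZK" for x
  proof -
    obtain z k where zk: "z \<in> center H" "k \<in> K" "x = z \<otimes> k" using x unfolding ZK_mem by blast
    have zc: "z \<in> carrier H" and kc: "k \<in> carrier H" using center_carrier[OF zk(1)] subsetD[OF K_subset zk(2)] by auto
    have "b1 \<otimes> z = z \<otimes> b1" using center_commute[OF zk(1) b1c] by simp
    hence "b1 \<otimes> x \<otimes> inv b1 = z \<otimes> (b1 \<otimes> k \<otimes> inv b1)"
      using zk(3) zc kc b1c by (simp add: m_assoc[symmetric])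
    thus ?thesis using ZK_memI[OF zk(1) normalizer_conj(1)[OF K_subset b1 zk(2)]] by simp
  qed
  show ?thesis
  proof
    show "(ZK #> b1) <#> (ZK #> b2) \<subseteq> ZK #> (b1 \<otimes> b2)"
    proof
      fix y assume "y \<in> (ZK #> b1) <#> (ZK #> b2)"
      then obtain x1 x2 where x: "x1 \<in> ZK" "x2 \<in> ZK" "y = (x1 \<otimes> b1) \<otimes> (x2 \<otimes> b2)"
        unfolding set_mult_def r_coset_def by blast
      have c: "x1 \<in> carrier H" "x2 \<in> carrier H" using x ZKc by auto
      have "y = (x1 \<otimes> (b1 \<otimes> x2 \<otimes> inv b1)) \<otimes> (b1 \<otimes> b2)" using x(3) c b1c b2c by (simp add: m_assoc)
      moreover have "x1 \<otimes> (b1 \<otimes> x2 \<otimes> inv b1) \<in> ZK" using subgroup.m_closed[OF subgroup_center_set_mult[OF K_sub] x(1) conjZK[OF x(2)]] .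
      ultimately show "y \<in> ZK #> (b1 \<otimes> b2)" unfolding r_coset_def by blast
    qed
  next
    show "ZK #> (b1 \<otimes> b2) \<subseteq> (ZK #> b1) <#> (ZK #> b2)"
    proof
      fix y assume "y \<in> ZK #> (b1 \<otimes> b2)"
      then obtain x where x: "x \<in> ZK" "y = x \<otimes> (b1 \<otimes> b2)" unfolding r_coset_def by blast
      have xc: "x \<in> carrier H" using x ZKc by auto
      have "y = (x \<otimes> b1) \<otimes> (\<one> \<otimes> b2)" using x(2) xc b1c b2c by (simp add: m_assoc)
      moreover have "\<one> \<in> ZK" using subgroup.one_closed[OF subgroup_center_set_mult[OF K_sub]] .
      ultimately show "y \<in> (ZK #> b1) <#> (ZK #> b2)" using x(1) unfolding set_mult_def r_coset_def by blast
    qed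
  qed
qed

abbreviation "OutV_group \<equiv> (OutL G)\<lparr>carrier := OutV H K \<phi>\<rparr>"
abbreviation "N_mod_ZK \<equiv> (H\<lparr>carrier := normalizer H K\<rparr>) Mod ZK"

definition "chi A = (SOME C. \<exists>b a. outV_pair b a \<and> A = outer_class G (alpha b a) \<and> C = ZK #> b)"

lemma chi_outer_class_alpha: assumes c: "outV_pair b a" shows "chi (outer_class G (alpha b a)) = ZK #> b"
proof -
  have "\<exists>b' a'. outV_pair b' a' \<and> outer_class G (alpha b a) = outer_class G (alpha b' a') \<and> chi (outer_class G (alpha b a)) = ZK #> b'"
    unfolding chi_def by (rule someI_ex) (use c in blast)
  then obtain b' a' where "outV_pair b' a'" "outer_class G (alpha b a) = outer_class G (alpha b' a')"
    "chi (outer_class G (alpha b a)) = ZK #> b'" by blast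
  thus ?thesis using coset_eq_if_outer_class_eq[OF c] by simp
qed

lemma OutV_eq: "OutV H K \<phi> = {outer_class G (alpha b a) | b a. outV_pair b a}"
  by (simp add: OutV_def outV_pair_def alpha_def)

lemma carrier_N_mod_ZK: "carrier N_mod_ZK = {ZK #> b | b. b \<in> normalizer H K}"
  by (auto simp: FactGroup_def RCOSETS_def r_coset_def)

lemma chi_hom: "chi \<in> hom OutV_group N_mod_ZK"
proof (rule homI)
  fix A assume "A \<in> carrier OutV_group"
  then obtain b a where "outV_pair b a" "A = outer_class G (alpha b a)" by (auto simp: OutV_eq)
  thus "chi A \<in> carrier N_mod_ZK" using chi_outer_class_alpha carrier_N_mod_ZK by (auto simp: outV_pair_def)
next
  fix A B assume "A \<in> carrier OutV_group" "B \<in> carrier OutV_group"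
  then obtain b1 a1 b2 a2 where c: "outV_pair b1 a1" "A = outer_class G (alpha b1 a1)"
      "outV_pair b2 a2" "B = outer_class G (alpha b2 a2)"
    by (auto simp: OutV_eq)
  have "alpha b1 a1 \<in> auto G" "alpha b2 a2 \<in> auto G"
    using is_alpha_alpha[OF c(1)] is_alpha_alpha[OF c(3)] by (auto simp: is_alpha_def)
  hence "A \<otimes>\<^bsub>OutV_group\<^esub> B = outer_class G (alpha (b1 \<otimes> b2) (conjH H b2 a1 \<otimes> a2))"
    using c HNN.outer_class_mult compose_alpha[OF c(1) c(3)] by (simp add: OutL_def FactGroup_def)
  hence "chi (A \<otimes>\<^bsub>OutV_group\<^esub> B) = ZK #> (b1 \<otimes> b2)"
    using chi_outer_class_alpha[OF outV_pair_mult[OF c(1) c(3)]] by simp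
  also have "\<dots> = (ZK #> b1) <#> (ZK #> b2)"
    using ZK_coset_mult c(1,3) by (simp add: outV_pair_def)
  finally show "chi (A \<otimes>\<^bsub>OutV_group\<^esub> B) = chi A \<otimes>\<^bsub>N_mod_ZK\<^esub> chi B"
    using c chi_outer_class_alpha by (simp add: FactGroup_def set_mult_def)
qed

lemma chi_image: "chi ` OutV H K \<phi> = carrier N_mod_ZK"
proof
  show "chi ` OutV H K \<phi> \<subseteq> carrier N_mod_ZK"
    using chi_outer_class_alpha carrier_N_mod_ZK by (auto simp: OutV_eq outV_pair_def)
next
  show "carrier N_mod_ZK \<subseteq> chi ` OutV H K \<phi>"
  proof
    fix C assume "C \<in> carrier N_mod_ZK"
    then obtain b where b: "b \<in> normalizer H K" "C = ZK #> b" using carrier_N_mod_ZK by auto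
    have bc: "b \<in> carrier H" using normalizer_carrier[OF b(1)] .
    have pb: "\<phi> b \<in> carrier H" using phi_closed[OF bc] .
    have "b \<otimes> (inv b \<otimes> \<phi> b) \<otimes> inv (\<phi> b) = \<one>" using bc pb by (simp add: m_assoc)
    moreover have "\<one> \<in> centralizer H (\<phi> ` K)" using phi_K_subset by (auto simp: centralizer_def)
    ultimately have c: "outV_pair b (inv b \<otimes> \<phi> b)" using b bc pb by (simp add: outV_pair_def)
    hence "chi (outer_class G (alpha b (inv b \<otimes> \<phi> b))) = C" using chi_outer_class_alpha b by simp
    moreover have "outer_class G (alpha b (inv b \<otimes> \<phi> b)) \<in> OutV H K \<phi>" using c by (auto simp: OutV_eq)
    ultimately show "C \<in> chi ` OutV H K \<phi>" by blast
  qed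
qed

lemma chi_kernel: "kernel OutV_group N_mod_ZK chi = CK H K \<phi>"
proof
  show "kernel OutV_group N_mod_ZK chi \<subseteq> CK H K \<phi>"
  proof
    fix A assume "A \<in> kernel OutV_group N_mod_ZK chi"
    hence A: "A \<in> OutV H K \<phi>" "chi A = ZK" by (auto simp: kernel_def)
    then obtain b a where c: "outV_pair b a" "A = outer_class G (alpha b a)" by (auto simp: OutV_eq)
    have bc: "b \<in> carrier H" using c normalizer_carrier by (simp add: outV_pair_def)
    have "ZK #> b = ZK" using A c chi_outer_class_alpha by simp
    hence "b \<in> ZK" using bc subgroup_center_set_mult[OF K_sub] by (metis coset_join1)
    then obtain a' where "a' \<in> centralizer H (\<phi> ` K)" "A = outer_class G (hnn_alpha H K \<phi> (\<lambda>h. h) a')"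
      using outer_class_alpha_trivial_coset[OF c(1)] c(2) by auto
    thus "A \<in> CK H K \<phi>" by (auto simp: CK_def)
  qed
next
  show "CK H K \<phi> \<subseteq> kernel OutV_group N_mod_ZK chi"
  proof
    fix A assume "A \<in> CK H K \<phi>"
    then obtain a where a: "a \<in> centralizer H (\<phi> ` K)" "A = outer_class G (hnn_alpha H K \<phi> (\<lambda>h. h) a)"
      by (auto simp: CK_def)
    have c: "outV_pair \<one> a" by (rule outV_pair_one[OF a(1)])
    have A: "A = outer_class G (alpha \<one> a)" using a(2) by (simp add: alpha_def hnn_alpha_conjH_one)
    have "ZK \<subseteq> carrier H" using subgroup_center_set_mult[OF K_sub] subgroup.subset by blast
    hence "chi A = ZK" using chi_outer_class_alpha[OF c] A by simp
    moreover have "A \<in> OutV H K \<phi>" using A c by (auto simp: OutV_eq)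
    ultimately show "A \<in> kernel OutV_group N_mod_ZK chi" by (simp add: kernel_def)
  qed
qed

end

theorem lemma4p4:
  fixes H :: "('a, 'm) monoid_scheme" and K :: "'a set" and \<phi> :: "'a \<Rightarrow> 'a"
  assumes "group H"
    and "subgroup K H" and "K \<noteq> carrier H"
    and "\<phi> \<in> hom H H" and "bij_betw \<phi> (carrier H) (carrier H)"
  shows "\<exists>\<chi>. \<chi> \<in> hom ((OutL (HNN H K \<phi>))\<lparr>carrier := OutV H K \<phi>\<rparr>)
                  ((H\<lparr>carrier := normalizer H K\<rparr>) Mod (center H <#>\<^bsub>H\<^esub> K))
          \<and> (\<forall>b a. b \<in> normalizer H K \<and> a \<in> carrier H \<and>
                   b \<otimes>\<^bsub>H\<^esub> a \<otimes>\<^bsub>H\<^esub> inv\<^bsub>H\<^esub> (\<phi> b) \<in> centralizer H (\<phi> ` K) \<longrightarrow>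
                   \<chi> (outer_class (HNN H K \<phi>) (hnn_alpha H K \<phi> (conjH H b) a))
                     = (center H <#>\<^bsub>H\<^esub> K) #>\<^bsub>H\<^esub> b)
          \<and> \<chi> ` OutV H K \<phi> = carrier ((H\<lparr>carrier := normalizer H K\<rparr>) Mod (center H <#>\<^bsub>H\<^esub> K))
          \<and> kernel ((OutL (HNN H K \<phi>))\<lparr>carrier := OutV H K \<phi>\<rparr>)
                   ((H\<lparr>carrier := normalizer H K\<rparr>) Mod (center H <#>\<^bsub>H\<^esub> K)) \<chi>
              = CK H K \<phi>"
proof -
  interpret hnn H K \<phi> using assms by (simp add: hnn_def hnn_axioms_def)
  show ?thesis
    using chi_hom chi_image chi_kernel chi_outer_class_alpha
    by (intro exI[of _ chi]) (auto simp: outV_pair_def alpha_def)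
qed

end
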